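(* Let $X$ be a compact Hausdorff space such that $C(X)$ is not $C^*$-reflexive. Then there exists a sequence $\{U_k\}_{k\in\mathbb N}$ of pairwise disjoint open subsets of $X$ such that $\prod_k C_0(U_k)$ is canonically included into $C(X)$.
   Context: A $C^*$-algebra $A$ is called $C^*$-reflexive if the standard Hilbert module $l_2(A)$ (right Hilbert $A$-module of sequences $(a_i)$ with $\sum_i a_i^*a_i$ norm convergent, inner product $\sum_i a_i^*b_i$) is $C^*$-reflexive, i.e. the canonical isometric inclusion $l_2(A)\subseteq l_2(A)''$ is surjective, where $M'$ denotes the module of bounded $A$-module maps $M\to A$ and $M''=(M')'$ (Paschke's conventions). For an open $U\subseteq X$, $C_0(U)$ is identified with the ideal of functions in $C(X)$ vanishing on $X\setminus U$. For pairwise disjoint open sets $U_k$, $\prod_k C_0(U_k)$ is the $C^*$-algebra of bounded sequences $(\lambda_k)$, $\lambda_k\in C_0(U_k)$, with sup norm. We say $\prod_kC_0(U_k)$ is canonically included into $C(X)$ if the canonical inclusion $\bigoplus_k C_0(U_k)\subseteq C(X)$ (sum of the functions) extends to an inclusion of $\prod_k C_0(U_k)$, i.e. for every bounded sequence $(\lambda_k)$ with $\lambda_k\in C_0(U_k)$ there is a (necessarily unique) continuous function on $X$ which equals $\lambda_k$ on each $U_k$ and vanishes on $X\setminus\overline{\bigcup_k U_k}$. *)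

theory Defs
  imports "HOL-Analysis.Analysis"
begin

text \<open>Elements are represented by functions that are
  continuous on X and vanish outside the carrier topspace X (so that equality of
  elements is equality of HOL functions).\<close>

definition cfun :: "'a topology \<Rightarrow> ('a \<Rightarrow> complex) set" where
  "cfun X = {f. continuous_map X euclidean f \<and> (\<forall>x. x \<notin> topspace X \<longrightarrow> f x = 0)}"

definition cnorm :: "'a topology \<Rightarrow> ('a \<Rightarrow> complex) \<Rightarrow> real" where
  "cnorm X f = Sup (insert 0 ((\<lambda>x. norm (f x)) ` topspace X))"

definition cconv :: "'a topology \<Rightarrow> (nat \<Rightarrow> 'a \<Rightarrow> complex) \<Rightarrow> ('a \<Rightarrow> complex) \<Rightarrow> bool" where
  "cconv X s g \<longleftrightarrow> g \<in> cfun X \<and> (\<forall>n. s n \<in> cfun X) \<and>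
      (\<lambda>n. cnorm X (\<lambda>x. s n x - g x)) \<longlonglongrightarrow> 0"

definition l2 :: "'a topology \<Rightarrow> (nat \<Rightarrow> 'a \<Rightarrow> complex) set" where
  "l2 X = {a. (\<forall>i. a i \<in> cfun X) \<and>
      (\<exists>g. cconv X (\<lambda>n x. \<Sum>i<n. cnj (a i x) * a i x) g)}"

text \<open>C(X)-valued inner product sum_i a_i^* b_i (its norm limit, computed pointwise).\<close>
definition l2inner :: "(nat \<Rightarrow> 'a \<Rightarrow> complex) \<Rightarrow> (nat \<Rightarrow> 'a \<Rightarrow> complex) \<Rightarrow> 'a \<Rightarrow> complex" where
  "l2inner a b = (\<lambda>x. \<Sum>i. cnj (a i x) * b i x)"

definition l2norm :: "'a topology \<Rightarrow> (nat \<Rightarrow> 'a \<Rightarrow> complex) \<Rightarrow> real" where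
  "l2norm X a = sqrt (cnorm X (l2inner a a))"

definition l2act :: "(nat \<Rightarrow> 'a \<Rightarrow> complex) \<Rightarrow> ('a \<Rightarrow> complex) \<Rightarrow> (nat \<Rightarrow> 'a \<Rightarrow> complex)" where
  "l2act a f = (\<lambda>i x. a i x * f x)"

definition l2dual :: "'a topology \<Rightarrow> ((nat \<Rightarrow> 'a \<Rightarrow> complex) \<Rightarrow> 'a \<Rightarrow> complex) set" where
  "l2dual X = {\<tau>. (\<forall>a. a \<notin> l2 X \<longrightarrow> \<tau> a = (\<lambda>x. 0)) \<and>
      (\<forall>a\<in>l2 X. \<tau> a \<in> cfun X) \<and>
      (\<forall>a\<in>l2 X. \<forall>b\<in>l2 X. \<tau> (\<lambda>i x. a i x + b i x) = (\<lambda>x. \<tau> a x + \<tau> b x)) \<and>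
      (\<forall>a\<in>l2 X. \<forall>f\<in>cfun X. \<tau> (l2act a f) = (\<lambda>x. \<tau> a x * f x)) \<and>
      (\<exists>C. \<forall>a\<in>l2 X. cnorm X (\<tau> a) \<le> C * l2norm X a)}"

definition dnorm :: "'a topology \<Rightarrow> ((nat \<Rightarrow> 'a \<Rightarrow> complex) \<Rightarrow> 'a \<Rightarrow> complex) \<Rightarrow> real" where
  "dnorm X \<tau> = Inf {C. 0 \<le> C \<and> (\<forall>a\<in>l2 X. cnorm X (\<tau> a) \<le> C * l2norm X a)}"

text \<open>Paschke's right module structure on M': (tau . f)(a) = f^* tau(a).\<close>
definition dact :: "((nat \<Rightarrow> 'a \<Rightarrow> complex) \<Rightarrow> 'a \<Rightarrow> complex) \<Rightarrow> ('a \<Rightarrow> complex)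
    \<Rightarrow> ((nat \<Rightarrow> 'a \<Rightarrow> complex) \<Rightarrow> 'a \<Rightarrow> complex)" where
  "dact \<tau> f = (\<lambda>a x. cnj (f x) * \<tau> a x)"

definition l2bidual :: "'a topology \<Rightarrow>
    (((nat \<Rightarrow> 'a \<Rightarrow> complex) \<Rightarrow> 'a \<Rightarrow> complex) \<Rightarrow> 'a \<Rightarrow> complex) set" where
  "l2bidual X = {F. (\<forall>\<tau>\<in>l2dual X. F \<tau> \<in> cfun X) \<and>
      (\<forall>\<tau>\<in>l2dual X. \<forall>\<sigma>\<in>l2dual X. F (\<lambda>a x. \<tau> a x + \<sigma> a x) = (\<lambda>x. F \<tau> x + F \<sigma> x)) \<and>
      (\<forall>\<tau>\<in>l2dual X. \<forall>f\<in>cfun X. F (dact \<tau> f) = (\<lambda>x. F \<tau> x * f x)) \<and>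
      (\<exists>C. \<forall>\<tau>\<in>l2dual X. cnorm X (F \<tau>) \<le> C * dnorm X \<tau>)}"

definition Cstar_reflexive_C :: "'a topology \<Rightarrow> bool" where
  "Cstar_reflexive_C X \<longleftrightarrow>
     (\<forall>F\<in>l2bidual X. \<exists>a\<in>l2 X. \<forall>\<tau>\<in>l2dual X. F \<tau> = (\<lambda>x. cnj (\<tau> a x)))"

text \<open>C_0(U) as the ideal of C(X) of functions vanishing on X - U.\<close>
definition C0 :: "'a topology \<Rightarrow> 'a set \<Rightarrow> ('a \<Rightarrow> complex) set" where
  "C0 X U = {f\<in>cfun X. \<forall>x\<in>topspace X - U. f x = 0}"

definition prod_canon_incl :: "'a topology \<Rightarrow> (nat \<Rightarrow> 'a set) \<Rightarrow> bool" where
  "prod_canon_incl X U \<longleftrightarrow>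
     (\<forall>lam::nat \<Rightarrow> 'a \<Rightarrow> complex. (\<forall>k. lam k \<in> C0 X (U k)) \<and> (\<exists>B. \<forall>k. cnorm X (lam k) \<le> B) \<longrightarrow>
        (\<exists>g\<in>cfun X. (\<forall>k. \<forall>x\<in>U k. g x = lam k x) \<and>
                    (\<forall>x\<in>topspace X - X closure_of (\<Union>k. U k). g x = 0)))"

end

theory Submission
  imports Defs
begin

(*
  Let F be an element of the bidual of l_2(C(X)) not of the form tau |-> cnj (tau a), and
  let c_i be its value on the i-th coordinate functional; the partial sums of
  sum_i |c_i|^2 are uniformly bounded on X.

  If this series converged uniformly, a = (cnj c_i) would lie in l_2(C(X)). For any tau in
  the dual, the coefficients tau(e_i) are square summable at every point, so by Baire's
  theorem their tails are uniformly small on some open set near any given point. Since F and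
  a agree on finite combinations of coordinate functionals, F tau - cnj (tau a) only sees the
  tail of tau, localised by an Urysohn function; hence it vanishes, contradicting the choice
  of F.

  So the series does not converge uniformly, and by compactness and the Hausdorff property
  one splits off, one after the other, disjoint nonempty open sets U_k on which some block
  sum_{n_k <= i < m_k} |c_i|^2 is at least e, with n_k >= k. Dividing a bounded
  lambda_k in C_0(U_k) by this block sum gives a functional phi_k supported on the block with
  F phi_k = lambda_k. As the blocks move off to infinity, the phi_k glue to a single bounded
  functional phi, and F phi is the required continuous extension of all lambda_k.
*)

section \<open>Continuous functions on a compact space\<close>

lemma continuous_map_mult [continuous_intros]:
  "continuous_map X euclidean f \<Longrightarrow> continuous_map X euclidean g \<Longrightarrow>
   continuous_map X euclidean (\<lambda>x. f x * g x :: 'b::real_normed_algebra)"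
  by (simp add: continuous_map_atin tendsto_mult)

lemma continuous_map_cnj [continuous_intros]:
  "continuous_map X euclidean f \<Longrightarrow> continuous_map X euclidean (\<lambda>x. cnj (f x))"
  by (simp add: continuous_map_atin tendsto_cnj)

lemma continuous_map_of_real [continuous_intros]:
  "continuous_map X euclidean f \<Longrightarrow> continuous_map X euclidean (\<lambda>x. complex_of_real (f x))"
  by (simp add: continuous_map_atin tendsto_of_real)

lemma continuous_map_divide [continuous_intros]:
  "continuous_map X euclidean f \<Longrightarrow> continuous_map X euclidean g \<Longrightarrow>
   (\<And>x. x \<in> topspace X \<Longrightarrow> g x \<noteq> 0) \<Longrightarrow>
   continuous_map X euclidean (\<lambda>x. f x / g x :: 'b::real_normed_field)"
  by (simp add: continuous_map_atin tendsto_divide)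

lemma cfunI: "continuous_map X euclidean f \<Longrightarrow> (\<And>x. x \<notin> topspace X \<Longrightarrow> f x = 0) \<Longrightarrow> f \<in> cfun X"
  by (simp add: cfun_def)

lemma cfun_continuous_map: "f \<in> cfun X \<Longrightarrow> continuous_map X euclidean f"
  by (simp add: cfun_def)

lemma cfun_outside: "f \<in> cfun X \<Longrightarrow> x \<notin> topspace X \<Longrightarrow> f x = 0"
  by (simp add: cfun_def)

lemma cfun_zero: "(\<lambda>x. 0) \<in> cfun X"
  by (simp add: cfun_def)

lemma cfun_const: "(\<lambda>x. if x \<in> topspace X then c else 0) \<in> cfun X"
  by (rule cfunI, rule continuous_map_eq[of _ _ "\<lambda>x. c"]) auto

lemma cfun_add: "f \<in> cfun X \<Longrightarrow> g \<in> cfun X \<Longrightarrow> (\<lambda>x. f x + g x) \<in> cfun X"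
  by (simp add: cfun_def continuous_map_add)

lemma cfun_diff: "f \<in> cfun X \<Longrightarrow> g \<in> cfun X \<Longrightarrow> (\<lambda>x. f x - g x) \<in> cfun X"
  by (simp add: cfun_def continuous_map_diff)

lemma cfun_minus: "f \<in> cfun X \<Longrightarrow> (\<lambda>x. - f x) \<in> cfun X"
  by (simp add: cfun_def)

lemma cfun_mult_left: "continuous_map X euclidean f \<Longrightarrow> g \<in> cfun X \<Longrightarrow> (\<lambda>x. f x * g x) \<in> cfun X"
  by (simp add: cfun_def continuous_map_mult)

lemma cfun_mult_right: "f \<in> cfun X \<Longrightarrow> continuous_map X euclidean g \<Longrightarrow> (\<lambda>x. f x * g x) \<in> cfun X"
  by (simp add: cfun_def continuous_map_mult)

lemma cfun_cnj: "f \<in> cfun X \<Longrightarrow> (\<lambda>x. cnj (f x)) \<in> cfun X"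
  by (simp add: cfun_def continuous_map_cnj)

lemma cfun_sum: "finite I \<Longrightarrow> (\<And>i. i \<in> I \<Longrightarrow> f i \<in> cfun X) \<Longrightarrow> (\<lambda>x. \<Sum>i\<in>I. f i x) \<in> cfun X"
  using continuous_map_sum[of I X "\<lambda>x i. f i x"] by (simp add: cfun_def)

lemma continuous_map_uniform_limit_sequentially:
  fixes s :: "nat \<Rightarrow> 'a \<Rightarrow> 'b::real_normed_vector"
  assumes "\<And>n. continuous_map X euclidean (s n)"
    and "\<And>e. e > 0 \<Longrightarrow> \<exists>N. \<forall>n\<ge>N. \<forall>x\<in>topspace X. norm (s n x - g x) \<le> e"
  shows "continuous_map X euclidean g"
proof (rule Met_TC.continuous_map_uniform_limit[where F=sequentially and f=s, simplified])
  show "\<forall>\<^sub>F n in sequentially. continuous_map X euclidean (s n)" using assms(1) by simp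
  fix e :: real assume "e > 0"
  then obtain N where N: "\<forall>n\<ge>N. \<forall>x\<in>topspace X. norm (s n x - g x) \<le> e/2"
    using assms(2)[of "e/2"] by auto
  have "dist (s n x) (g x) < e" if "N \<le> n" "x \<in> topspace X" for n x
    using N that \<open>e > 0\<close> unfolding dist_norm by force
  then show "\<forall>\<^sub>F n in sequentially. \<forall>x\<in>topspace X. dist (s n x) (g x) < e"
    unfolding eventually_sequentially by blast
qed

lemma continuous_map_bounded:
  assumes "compact_space X" "continuous_map X euclidean (f :: 'a \<Rightarrow> 'b::real_normed_vector)"
  obtains B where "\<And>x. x \<in> topspace X \<Longrightarrow> norm (f x) \<le> B"
proof -
  have "compactin euclidean (f ` topspace X)"
    using image_compactin assms unfolding compact_space_def by blast
  then have "bounded (f ` topspace X)"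
    using compact_imp_bounded compactin_euclidean_iff by blast
  then show ?thesis using that by (auto simp: bounded_iff)
qed

lemma cfun_bounded:
  assumes "compact_space X" "f \<in> cfun X"
  obtains B where "0 \<le> B" "\<And>x. cmod (f x) \<le> B"
proof -
  obtain B where "\<And>x. x \<in> topspace X \<Longrightarrow> cmod (f x) \<le> B"
    using continuous_map_bounded assms cfun_continuous_map by metis
  then have "cmod (f x) \<le> max B 0" for x
    using cfun_outside[OF assms(2), of x] by (cases "x \<in> topspace X") force+
  then show ?thesis using that[of "max B 0"] by simp
qed

lemma bdd_above_cnorm:
  assumes "compact_space X" "continuous_map X euclidean f"
  shows "bdd_above (insert 0 ((\<lambda>x. norm (f x)) ` topspace X))"
proof -
  obtain B where "\<And>x. x \<in> topspace X \<Longrightarrow> norm (f x) \<le> B"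
    using continuous_map_bounded assms by blast
  then show ?thesis by (intro bdd_aboveI[of _ "max 0 B"]) force
qed

lemma cnorm_upper:
  "compact_space X \<Longrightarrow> continuous_map X euclidean f \<Longrightarrow> x \<in> topspace X \<Longrightarrow> norm (f x) \<le> cnorm X f"
  unfolding cnorm_def by (rule cSup_upper[OF _ bdd_above_cnorm]) auto

lemma cnorm_nonneg:
  "compact_space X \<Longrightarrow> continuous_map X euclidean f \<Longrightarrow> 0 \<le> cnorm X f"
  unfolding cnorm_def by (rule cSup_upper[OF _ bdd_above_cnorm]) auto

lemma cnorm_least:
  assumes "0 \<le> M" "\<And>x. x \<in> topspace X \<Longrightarrow> norm (f x) \<le> M"
  shows "cnorm X f \<le> M"
  unfolding cnorm_def by (rule cSup_least) (use assms in auto)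

lemma cfun_norm_le:
  assumes "compact_space X" "f \<in> cfun X" "cnorm X f \<le> B"
  shows "cmod (f x) \<le> B"
proof -
  have "0 \<le> B" using cnorm_nonneg[OF assms(1) cfun_continuous_map[OF assms(2)]] assms(3) by linarith
  then show ?thesis
    using cnorm_upper[OF assms(1) cfun_continuous_map[OF assms(2)]] cfun_outside[OF assms(2)] assms(3)
    by (cases "x \<in> topspace X") force+
qed

lemma cnorm_add_le:
  assumes "compact_space X" "continuous_map X euclidean f" "continuous_map X euclidean g"
  shows "cnorm X (\<lambda>x. f x + g x) \<le> cnorm X f + cnorm X g"
proof (rule cnorm_least)
  show "0 \<le> cnorm X f + cnorm X g"
    using cnorm_nonneg assms by (metis add_nonneg_nonneg)
  fix x assume x: "x \<in> topspace X"
  have "cmod (f x + g x) \<le> cmod (f x) + cmod (g x)" by (rule norm_triangle_ineq)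
  also have "\<dots> \<le> cnorm X f + cnorm X g"
    using cnorm_upper[OF assms(1,2) x] cnorm_upper[OF assms(1,3) x] by linarith
  finally show "cmod (f x + g x) \<le> cnorm X f + cnorm X g" .
qed

lemma cnorm_mult_le:
  assumes "compact_space X" "continuous_map X euclidean g"
    and "0 \<le> B" "\<And>x. x \<in> topspace X \<Longrightarrow> cmod (f x) \<le> B"
  shows "cnorm X (\<lambda>x. f x * g x) \<le> B * cnorm X g"
proof (rule cnorm_least)
  show "0 \<le> B * cnorm X g" using cnorm_nonneg[OF assms(1,2)] assms(3) by simp
  fix x assume x: "x \<in> topspace X"
  have "cmod (f x * g x) = cmod (f x) * cmod (g x)" by (simp add: norm_mult)
  also have "\<dots> \<le> B * cnorm X g"
    using cnorm_upper[OF assms(1,2) x] assms(3) assms(4)[OF x] by (intro mult_mono) auto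
  finally show "cmod (f x * g x) \<le> B * cnorm X g" .
qed

lemma urysohn_cfun:
  assumes "compact_space X" "Hausdorff_space X" "openin X V" "x \<in> V"
  obtains f where "f \<in> cfun X" "f x = 1" "\<And>y. y \<notin> V \<Longrightarrow> f y = 0" "\<And>y. cmod (f y) \<le> 1"
proof -
  have normal: "normal_space X"
    using compact_Hausdorff_or_regular_imp_normal_space assms(1,2) by metis
  have xT: "x \<in> topspace X" using assms(3,4) openin_subset by fastforce
  have "closedin X {x}"
    using closedin_t1_singleton[OF Hausdorff_imp_t1_space[OF assms(2)] xT] .
  moreover have "closedin X (topspace X - V)" using assms(3) by (simp add: closedin_diff)
  moreover have "disjnt (topspace X - V) {x}" using assms(4) by (simp add: disjnt_def)
  ultimately obtain r where r: "continuous_map X (top_of_set {0..1}) r"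
      "r ` (topspace X - V) \<subseteq> {0}" "r ` {x} \<subseteq> {1::real}"
    using Urysohn_lemma[OF normal, of "topspace X - V" "{x}" 0 1] by auto
  have rc: "continuous_map X euclidean r" and rr: "\<And>y. y \<in> topspace X \<Longrightarrow> r y \<in> {0..1}"
    using r(1) unfolding continuous_map_in_subtopology by auto
  define f where "f y = (if y \<in> topspace X then complex_of_real (r y) else 0)" for y
  have "continuous_map X euclidean f"
    by (rule continuous_map_eq[OF continuous_map_of_real[OF rc]]) (simp add: f_def)
  then have "f \<in> cfun X" by (rule cfunI) (simp add: f_def)
  moreover have "f x = 1" using r(3) xT by (simp add: f_def)
  moreover have "f y = 0" if "y \<notin> V" for y using r(2) that by (auto simp: f_def)
  moreover have "cmod (f y) \<le> 1" for y using rr[of y] by (auto simp: f_def)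
  ultimately show ?thesis using that by blast
qed

section \<open>The standard module as uniformly convergent square sums\<close>

definition sqmod :: "(nat \<Rightarrow> 'a \<Rightarrow> complex) \<Rightarrow> 'a \<Rightarrow> nat \<Rightarrow> real" where
  "sqmod a x i = (cmod (a i x))\<^sup>2"

definition sqsum :: "(nat \<Rightarrow> 'a \<Rightarrow> complex) \<Rightarrow> 'a \<Rightarrow> real" where
  "sqsum a x = suminf (sqmod a x)"

definition unif_sq_cauchy :: "'a topology \<Rightarrow> (nat \<Rightarrow> 'a \<Rightarrow> complex) \<Rightarrow> bool" where
  "unif_sq_cauchy X a \<longleftrightarrow>
     (\<forall>d>0. \<exists>N. \<forall>n\<ge>N. \<forall>m. \<forall>x\<in>topspace X. sum (sqmod a x) {n..<m} \<le> d)"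

lemma sqmod_nonneg: "0 \<le> sqmod a x i"
  by (simp add: sqmod_def)

lemma cnj_mult_self: "cnj z * z = complex_of_real ((cmod z)\<^sup>2)"
  by (metis complex_norm_square mult.commute)

lemma sum_mult_cnj_self: "(\<Sum>i\<in>I. z i * cnj (z i)) = complex_of_real (\<Sum>i\<in>I. (cmod (z i))\<^sup>2)"
  by (simp only: of_real_sum complex_norm_square)

lemma sum_lessThan_split: "n \<le> m \<Longrightarrow> sum f {..<m} = sum f {..<n} + sum f {n..<m::nat}"
  by (metis lessThan_atLeast0 sum.atLeastLessThan_concat zero_le)

lemma continuous_map_sum_sqmod:
  "(\<And>i. c i \<in> cfun X) \<Longrightarrow> continuous_map X euclidean (\<lambda>x. sum (sqmod c x) {n..<m})"
  unfolding sqmod_def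
  by (intro continuous_map_sum finite_atLeastLessThan continuous_map_real_pow continuous_map_norm
      cfun_continuous_map)

lemma unif_sq_cauchy_summable:
  assumes "unif_sq_cauchy X a" "x \<in> topspace X"
  shows "summable (sqmod a x)"
  unfolding summable_Cauchy
proof (intro allI impI)
  fix e :: real assume "e > 0"
  then obtain N where N: "\<forall>n\<ge>N. \<forall>m. \<forall>x\<in>topspace X. sum (sqmod a x) {n..<m} \<le> e/2"
    using assms(1) unfolding unif_sq_cauchy_def by (meson half_gt_zero)
  have "norm (sum (sqmod a x) {m..<n}) < e" if "N \<le> m" for m n
  proof -
    have "0 \<le> sum (sqmod a x) {m..<n}" by (simp add: sum_nonneg sqmod_nonneg)
    moreover have "sum (sqmod a x) {m..<n} \<le> e/2" using N that assms(2) by auto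
    ultimately show ?thesis using \<open>e > 0\<close> by simp
  qed
  then show "\<exists>N. \<forall>m\<ge>N. \<forall>n. norm (sum (sqmod a x) {m..<n}) < e" by blast
qed

lemma summable_sqmod_if_bounded:
  assumes "\<And>n. sum (sqmod a x) {..<n} \<le> K"
  shows "summable (sqmod a x)"
proof (rule bounded_imp_summable[of _ K])
  show "0 \<le> sqmod a x n" for n by (rule sqmod_nonneg)
  show "sum (sqmod a x) {..n} \<le> K" for n using assms[of "Suc n"] unfolding lessThan_Suc_atMost .
qed

lemma sum_sqmod_le_sqsum: "summable (sqmod a x) \<Longrightarrow> sum (sqmod a x) {..<n} \<le> sqsum a x"
  unfolding sqsum_def by (intro sum_le_suminf) (auto simp: sqmod_nonneg)

lemma sqsum_nonneg: "summable (sqmod a x) \<Longrightarrow> 0 \<le> sqsum a x"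
  unfolding sqsum_def by (intro suminf_nonneg) (auto simp: sqmod_nonneg)

lemma sqsum_minus_prefix_le:
  assumes "summable (sqmod a x)" "\<And>m. sum (sqmod a x) {n..<m} \<le> d"
  shows "sqsum a x - sum (sqmod a x) {..<n} \<le> d"
proof -
  have "sum (sqmod a x) {..<m} - sum (sqmod a x) {..<n} \<le> d" for m
  proof (cases "n \<le> m")
    case True
    then show ?thesis using sum_lessThan_split[OF True, of "sqmod a x"] assms(2)[of m] by simp
  next
    case False
    then have "sum (sqmod a x) {..<m} \<le> sum (sqmod a x) {..<n}"
      by (intro sum_mono2) (auto simp: sqmod_nonneg)
    then show ?thesis using assms(2)[of n] by simp
  qed
  moreover have "(\<lambda>m. sum (sqmod a x) {..<m} - sum (sqmod a x) {..<n})
      \<longlonglongrightarrow> sqsum a x - sum (sqmod a x) {..<n}"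
    unfolding sqsum_def by (intro tendsto_diff summable_LIMSEQ assms(1) tendsto_const)
  ultimately show ?thesis by (intro LIMSEQ_le_const2) auto
qed

lemma cfun_sum_cnj_mult_self:
  fixes a :: "nat \<Rightarrow> 'a \<Rightarrow> complex"
  shows "(\<And>i. a i \<in> cfun X) \<Longrightarrow> (\<lambda>x. \<Sum>i<n. cnj (a i x) * a i x) \<in> cfun X"
  by (rule cfun_sum) (simp_all add: cfun_mult_left continuous_map_cnj cfun_continuous_map)

lemma unif_sq_cauchy_partial_sums:
  assumes uc: "unif_sq_cauchy X a" and d: "d > 0"
  obtains N where "\<And>n x. N \<le> n \<Longrightarrow> x \<in> topspace X \<Longrightarrow>
    norm ((\<Sum>i<n. cnj (a i x) * a i x) - complex_of_real (sqsum a x)) \<le> d"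
proof -
  obtain N where N: "\<forall>n\<ge>N. \<forall>m. \<forall>x\<in>topspace X. sum (sqmod a x) {n..<m} \<le> d"
    using uc d unfolding unif_sq_cauchy_def by auto
  have "norm ((\<Sum>i<n. cnj (a i x) * a i x) - complex_of_real (sqsum a x)) \<le> d"
    if "N \<le> n" "x \<in> topspace X" for n x
  proof -
    have sm: "summable (sqmod a x)" by (rule unif_sq_cauchy_summable[OF uc that(2)])
    have "(\<Sum>i<n. cnj (a i x) * a i x) - complex_of_real (sqsum a x)
        = complex_of_real (sum (sqmod a x) {..<n} - sqsum a x)"
      by (simp add: sqmod_def cnj_mult_self)
    moreover have "\<bar>sqsum a x - sum (sqmod a x) {..<n}\<bar> \<le> d"
      using sqsum_minus_prefix_le[OF sm, of n d] sum_sqmod_le_sqsum[OF sm, of n] N that by auto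
    ultimately show ?thesis by (simp only: norm_of_real abs_minus_commute)
  qed
  then show ?thesis using that by blast
qed

lemma unif_sq_cauchy_continuous_map:
  assumes a: "\<And>i. a i \<in> cfun X" and uc: "unif_sq_cauchy X a"
  shows "continuous_map X euclidean (\<lambda>x. complex_of_real (sqsum a x))"
proof (rule continuous_map_uniform_limit_sequentially)
  show "continuous_map X euclidean (\<lambda>x. \<Sum>i<n. cnj (a i x) * a i x)" for n
    by (rule cfun_continuous_map[OF cfun_sum_cnj_mult_self[OF a]])
  show "\<exists>N. \<forall>n\<ge>N. \<forall>x\<in>topspace X.
      norm ((\<Sum>i<n. cnj (a i x) * a i x) - complex_of_real (sqsum a x)) \<le> e" if e: "e > 0" for e
  proof -
    obtain N where "\<And>n x. N \<le> n \<Longrightarrow> x \<in> topspace X \<Longrightarrow>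
        norm ((\<Sum>i<n. cnj (a i x) * a i x) - complex_of_real (sqsum a x)) \<le> e"
      using unif_sq_cauchy_partial_sums[OF uc e] by metis
    then show ?thesis by blast
  qed
qed

lemma unif_sq_cauchy_imp_l2:
  assumes X: "compact_space X" and a: "\<And>i. a i \<in> cfun X" and uc: "unif_sq_cauchy X a"
  shows "a \<in> l2 X"
proof -
  define g where "g x = (if x \<in> topspace X then complex_of_real (sqsum a x) else 0)" for x
  define s where "s n x = (\<Sum>i<n. cnj (a i x) * a i x)" for n x
  have s_cfun: "s n \<in> cfun X" for n
    unfolding s_def by (rule cfun_sum_cnj_mult_self[OF a])
  have g_cfun: "g \<in> cfun X"
    by (rule cfunI, rule continuous_map_eq[OF unif_sq_cauchy_continuous_map[OF a uc]])
       (simp_all add: g_def)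
  have "(\<lambda>n. cnorm X (\<lambda>x. s n x - g x)) \<longlonglongrightarrow> 0"
  proof (rule LIMSEQ_I)
    fix r :: real assume "r > 0"
    then obtain N where N: "\<And>n x. N \<le> n \<Longrightarrow> x \<in> topspace X \<Longrightarrow> norm (s n x - g x) \<le> r/2"
      using unif_sq_cauchy_partial_sums[OF uc, of "r/2"] unfolding s_def g_def by auto
    have "norm (cnorm X (\<lambda>x. s n x - g x)) < r" if "N \<le> n" for n
    proof -
      have "0 \<le> cnorm X (\<lambda>x. s n x - g x)"
        by (rule cnorm_nonneg[OF X cfun_continuous_map[OF cfun_diff[OF s_cfun g_cfun]]])
      moreover have "cnorm X (\<lambda>x. s n x - g x) \<le> r/2"
        using N that \<open>r > 0\<close> by (intro cnorm_least) auto
      ultimately show ?thesis using \<open>r > 0\<close> by simp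
    qed
    then show "\<exists>N. \<forall>n\<ge>N. norm (cnorm X (\<lambda>x. s n x - g x) - 0) < r" by auto
  qed
  then have "cconv X s g" using g_cfun s_cfun unfolding cconv_def by auto
  then show "a \<in> l2 X" unfolding l2_def mem_Collect_eq s_def using a by (intro conjI exI allI)
qed

lemma l2D: "a \<in> l2 X \<Longrightarrow> a i \<in> cfun X"
  by (simp add: l2_def)

lemma l2_outside: "a \<in> l2 X \<Longrightarrow> x \<notin> topspace X \<Longrightarrow> a i x = 0"
  using l2D cfun_outside by metis

lemma l2_imp_unif_sq_cauchy:
  assumes X: "compact_space X" and a: "a \<in> l2 X"
  shows "unif_sq_cauchy X a"
  unfolding unif_sq_cauchy_def
proof (intro allI impI)
  fix d :: real assume "d > 0"
  define s where "s n x = (\<Sum>i<n. cnj (a i x) * a i x)" for n x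
  have s_eq: "s n x = complex_of_real (sum (sqmod a x) {..<n})" for n x
    unfolding s_def by (simp add: cnj_mult_self sqmod_def)
  obtain g where "cconv X s g" using a unfolding l2_def s_def by auto
  then have g: "g \<in> cfun X" and s: "\<And>n. s n \<in> cfun X"
    and lim: "(\<lambda>n. cnorm X (\<lambda>x. s n x - g x)) \<longlonglongrightarrow> 0" unfolding cconv_def by auto
  obtain N where N: "\<And>n. N \<le> n \<Longrightarrow> norm (cnorm X (\<lambda>x. s n x - g x) - 0) < d"
    using LIMSEQ_D[OF lim \<open>d > 0\<close>] by auto
  have pointwise: "norm (s n x - g x) \<le> cnorm X (\<lambda>x. s n x - g x)" if "x \<in> topspace X" for n x
    by (rule cnorm_upper[OF X cfun_continuous_map[OF cfun_diff[OF s g]] that])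
  show "\<exists>N. \<forall>n\<ge>N. \<forall>m. \<forall>x\<in>topspace X. sum (sqmod a x) {n..<m} \<le> d"
  proof (intro exI allI impI ballI)
    fix n m x assume n: "N \<le> n" and x: "x \<in> topspace X"
    have "(\<lambda>k. s k x - g x) \<longlonglongrightarrow> 0"
      by (rule Lim_null_comparison[OF _ lim]) (use pointwise x in auto)
    then have "(\<lambda>k. Re (s k x)) \<longlonglongrightarrow> Re (g x)"
      by (intro tendsto_Re) (simp add: LIM_zero_iff)
    then have lim_x: "(\<lambda>k. sum (sqmod a x) {..<k}) \<longlonglongrightarrow> Re (g x)" by (simp add: s_eq)
    have "incseq (\<lambda>k. sum (sqmod a x) {..<k})"
      by (intro monoI sum_mono2) (auto simp: sqmod_nonneg)
    then have le: "sum (sqmod a x) {..<m} \<le> Re (g x)" using lim_x by (rule incseq_le)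
    show "sum (sqmod a x) {n..<m} \<le> d"
    proof (cases "n \<le> m")
      case True
      have "sum (sqmod a x) {n..<m} = sum (sqmod a x) {..<m} - sum (sqmod a x) {..<n}"
        using sum_lessThan_split[OF True, of "sqmod a x"] by simp
      also have "\<dots> \<le> Re (g x - s n x)" using le by (simp add: s_eq)
      also have "\<dots> \<le> norm (s n x - g x)"
        by (metis complex_Re_le_cmod norm_minus_commute)
      also have "\<dots> < d" using pointwise[OF x, of n] N[OF n] by simp
      finally show ?thesis by simp
    qed (use \<open>d > 0\<close> in simp)
  qed
qed

lemma l2_iff_unif_sq_cauchy:
  "compact_space X \<Longrightarrow> a \<in> l2 X \<longleftrightarrow> (\<forall>i. a i \<in> cfun X) \<and> unif_sq_cauchy X a"
  using l2_imp_unif_sq_cauchy unif_sq_cauchy_imp_l2 l2D by metis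

lemma l2_summable: "compact_space X \<Longrightarrow> a \<in> l2 X \<Longrightarrow> x \<in> topspace X \<Longrightarrow> summable (sqmod a x)"
  using unif_sq_cauchy_summable l2_imp_unif_sq_cauchy by metis

lemma l2inner_self:
  assumes X: "compact_space X" and a: "a \<in> l2 X"
  shows "l2inner a a x = complex_of_real (sqsum a x)"
proof (cases "x \<in> topspace X")
  case True
  have "l2inner a a x = (\<Sum>i. complex_of_real (sqmod a x i))"
    unfolding l2inner_def by (simp add: cnj_mult_self sqmod_def)
  also have "\<dots> = complex_of_real (sqsum a x)"
    unfolding sqsum_def by (rule suminf_of_real[symmetric, OF l2_summable[OF X a True]])
  finally show ?thesis .
next
  case False
  then have "sqmod a x = (\<lambda>i. 0)" by (simp add: sqmod_def l2_outside[OF a] fun_eq_iff)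
  then show ?thesis using l2_outside[OF a False] by (simp add: l2inner_def sqsum_def)
qed

lemma continuous_map_sqsum:
  assumes "compact_space X" "a \<in> l2 X"
  shows "continuous_map X euclidean (\<lambda>x. complex_of_real (sqsum a x))"
  by (rule unif_sq_cauchy_continuous_map[OF l2D[OF assms(2)] l2_imp_unif_sq_cauchy[OF assms]])

lemma l2norm_eq:
  "compact_space X \<Longrightarrow> a \<in> l2 X \<Longrightarrow> l2norm X a = sqrt (cnorm X (\<lambda>x. complex_of_real (sqsum a x)))"
proof -
  assume "compact_space X" "a \<in> l2 X"
  then have "l2inner a a = (\<lambda>x. complex_of_real (sqsum a x))" by (intro ext l2inner_self)
  then show ?thesis unfolding l2norm_def by simp
qed

lemma l2norm_nonneg: "compact_space X \<Longrightarrow> a \<in> l2 X \<Longrightarrow> 0 \<le> l2norm X a"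
  by (simp add: l2norm_eq cnorm_nonneg continuous_map_sqsum)

lemma sum_sqmod_le_l2norm:
  assumes X: "compact_space X" and a: "a \<in> l2 X" and x: "x \<in> topspace X"
  shows "sum (sqmod a x) {n..<m} \<le> (l2norm X a)\<^sup>2"
proof -
  have sm: "summable (sqmod a x)" by (rule l2_summable[OF X a x])
  have "sum (sqmod a x) {n..<m} \<le> sum (sqmod a x) {..<m}"
    by (rule sum_mono2) (auto simp: sqmod_nonneg)
  also have "\<dots> \<le> sqsum a x" by (rule sum_sqmod_le_sqsum[OF sm])
  also have "\<dots> = norm (complex_of_real (sqsum a x))" using sqsum_nonneg[OF sm] by simp
  also have "\<dots> \<le> cnorm X (\<lambda>x. complex_of_real (sqsum a x))"
    by (rule cnorm_upper[OF X continuous_map_sqsum[OF X a] x])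
  also have "\<dots> = (l2norm X a)\<^sup>2"
    by (simp add: l2norm_eq[OF X a] cnorm_nonneg[OF X continuous_map_sqsum[OF X a]])
  finally show ?thesis .
qed

lemma sqrt_sum_sqmod_le_l2norm:
  "compact_space X \<Longrightarrow> a \<in> l2 X \<Longrightarrow> x \<in> topspace X \<Longrightarrow> sqrt (sum (sqmod a x) {n..<m}) \<le> l2norm X a"
  using sum_sqmod_le_l2norm[of X a x n m] l2norm_nonneg[of X a] real_le_lsqrt
  by (simp add: real_sqrt_le_iff)

lemma coord_le_l2norm:
  assumes X: "compact_space X" and a: "a \<in> l2 X" and x: "x \<in> topspace X"
  shows "cmod (a i x) \<le> l2norm X a"
  using sqrt_sum_sqmod_le_l2norm[OF assms, of i "Suc i"] by (simp add: sqmod_def)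

lemma l2norm_le:
  assumes X: "compact_space X" and a: "a \<in> l2 X" and M: "0 \<le> M"
    and bound: "\<And>x n. x \<in> topspace X \<Longrightarrow> sum (sqmod a x) {..<n} \<le> M"
  shows "l2norm X a \<le> sqrt M"
proof -
  have "cnorm X (\<lambda>x. complex_of_real (sqsum a x)) \<le> M"
  proof (rule cnorm_least[OF M])
    fix x assume x: "x \<in> topspace X"
    have sm: "summable (sqmod a x)" by (rule l2_summable[OF X a x])
    have "sqsum a x \<le> M" unfolding sqsum_def by (rule suminf_le_const[OF sm]) (use bound x in auto)
    then show "cmod (complex_of_real (sqsum a x)) \<le> M" using sqsum_nonneg[OF sm] by simp
  qed
  then show ?thesis using l2norm_eq[OF X a] by simp
qed

section \<open>Module structure and the dual module\<close>

lemma cmod_add_sq_le: "(cmod (u + v))\<^sup>2 \<le> 2 * ((cmod u)\<^sup>2 + (cmod v)\<^sup>2)"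
proof -
  have "(cmod (u + v))\<^sup>2 \<le> (cmod u + cmod v)\<^sup>2"
    by (simp add: power_mono norm_triangle_ineq)
  also have "\<dots> = (cmod u)\<^sup>2 + (cmod v)\<^sup>2 + 2 * cmod u * cmod v" by (rule power2_sum)
  also have "\<dots> \<le> (cmod u)\<^sup>2 + (cmod v)\<^sup>2 + ((cmod u)\<^sup>2 + (cmod v)\<^sup>2)"
    by (rule add_left_mono[OF sum_squares_bound])
  finally show ?thesis by simp
qed

lemma cauchy_schwarz_complex:
  fixes u v :: "'i \<Rightarrow> complex"
  shows "norm (\<Sum>i\<in>I. u i * v i) \<le> sqrt (\<Sum>i\<in>I. (cmod (u i))\<^sup>2) * sqrt (\<Sum>i\<in>I. (cmod (v i))\<^sup>2)"
proof -
  have "norm (\<Sum>i\<in>I. u i * v i) \<le> (\<Sum>i\<in>I. cmod (u i) * cmod (v i))"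
    by (rule order_trans[OF norm_sum]) (simp add: norm_mult)
  also have "\<dots> \<le> sqrt ((\<Sum>i\<in>I. (cmod (u i))\<^sup>2) * (\<Sum>i\<in>I. (cmod (v i))\<^sup>2))"
    by (rule real_le_rsqrt) (rule Cauchy_Schwarz_ineq_sum)
  also have "\<dots> = sqrt (\<Sum>i\<in>I. (cmod (u i))\<^sup>2) * sqrt (\<Sum>i\<in>I. (cmod (v i))\<^sup>2)"
    by (simp add: real_sqrt_mult)
  finally show ?thesis .
qed

lemma unif_sq_cauchy_dominated:
  assumes ua: "unif_sq_cauchy X a" and uc: "unif_sq_cauchy X c" and K: "0 \<le> K"
    and dom: "\<And>x i. x \<in> topspace X \<Longrightarrow> sqmod b x i \<le> K * (sqmod a x i + sqmod c x i)"
  shows "unif_sq_cauchy X b"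
  unfolding unif_sq_cauchy_def
proof (intro allI impI)
  fix d :: real assume "d > 0"
  define e where "e = d / (2 * (K + 1))"
  have e: "e > 0" using \<open>d > 0\<close> K by (simp add: e_def)
  obtain N1 where N1: "\<forall>n\<ge>N1. \<forall>m. \<forall>x\<in>topspace X. sum (sqmod a x) {n..<m} \<le> e"
    using ua e unfolding unif_sq_cauchy_def by auto
  obtain N2 where N2: "\<forall>n\<ge>N2. \<forall>m. \<forall>x\<in>topspace X. sum (sqmod c x) {n..<m} \<le> e"
    using uc e unfolding unif_sq_cauchy_def by auto
  have "sum (sqmod b x) {n..<m} \<le> d" if "max N1 N2 \<le> n" "x \<in> topspace X" for n m x
  proof -
    have "sum (sqmod b x) {n..<m} \<le> (\<Sum>i=n..<m. K * (sqmod a x i + sqmod c x i))"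
      using dom[OF that(2)] by (rule sum_mono)
    also have "\<dots> = K * (sum (sqmod a x) {n..<m} + sum (sqmod c x) {n..<m})"
      by (simp add: sum_distrib_left[symmetric] sum.distrib)
    also have "\<dots> \<le> K * (2 * e)"
      using N1 N2 that K by (intro mult_left_mono) (auto intro!: add_mono[of _ e _ e, simplified])
    also have "\<dots> = d * (K / (K + 1))"
      using K by (simp add: e_def field_simps)
    also have "\<dots> \<le> d" using K \<open>d > 0\<close> by (simp add: divide_le_eq algebra_simps)
    finally show ?thesis .
  qed
  then show "\<exists>N. \<forall>n\<ge>N. \<forall>m. \<forall>x\<in>topspace X. sum (sqmod b x) {n..<m} \<le> d" by blast
qed

lemma unif_sq_cauchy_finite_support:
  assumes "\<And>i x. N \<le> i \<Longrightarrow> b i x = 0"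
  shows "unif_sq_cauchy X b"
  unfolding unif_sq_cauchy_def
proof (intro allI impI exI[of _ N] ballI)
  fix d :: real and n m x assume "d > 0" "N \<le> n"
  then show "sum (sqmod b x) {n..<m} \<le> d"
    using assms by (simp add: sqmod_def)
qed

lemma l2_add:
  assumes X: "compact_space X" and a: "a \<in> l2 X" and b: "b \<in> l2 X"
  shows "(\<lambda>i x. a i x + b i x) \<in> l2 X"
proof -
  have "unif_sq_cauchy X (\<lambda>i x. a i x + b i x)"
    by (rule unif_sq_cauchy_dominated[OF l2_imp_unif_sq_cauchy[OF X a] l2_imp_unif_sq_cauchy[OF X b], of 2])
       (use cmod_add_sq_le in \<open>auto simp: sqmod_def\<close>)
  then show ?thesis using a b X by (simp add: l2_iff_unif_sq_cauchy cfun_add l2D)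
qed

lemma l2_act:
  assumes X: "compact_space X" and a: "a \<in> l2 X" and f: "f \<in> cfun X"
  shows "l2act a f \<in> l2 X"
proof -
  obtain B where B: "0 \<le> B" "\<And>x. cmod (f x) \<le> B" using cfun_bounded[OF X f] by blast
  have "sqmod (l2act a f) x i \<le> B\<^sup>2 * (sqmod a x i + sqmod a x i)" for x i
  proof -
    have "sqmod (l2act a f) x i = (cmod (a i x))\<^sup>2 * (cmod (f x))\<^sup>2"
      by (simp add: sqmod_def l2act_def norm_mult power_mult_distrib)
    also have "\<dots> \<le> (cmod (a i x))\<^sup>2 * B\<^sup>2"
      using B by (intro mult_left_mono power_mono) auto
    also have "\<dots> \<le> B\<^sup>2 * (sqmod a x i + sqmod a x i)"
      by (simp add: sqmod_def mult.commute)
    finally show ?thesis .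
  qed
  then have "unif_sq_cauchy X (l2act a f)"
    by (intro unif_sq_cauchy_dominated[OF l2_imp_unif_sq_cauchy[OF X a] l2_imp_unif_sq_cauchy[OF X a], of "B\<^sup>2"])
       auto
  moreover have "l2act a f i \<in> cfun X" for i
    using a f unfolding l2act_def by (auto intro: cfun_mult_right l2D cfun_continuous_map)
  ultimately show ?thesis using l2_iff_unif_sq_cauchy[OF X] by auto
qed

lemma l2_restrict:
  assumes X: "compact_space X" and a: "a \<in> l2 X"
  shows "(\<lambda>i x. if P i then a i x else 0) \<in> l2 X"
proof -
  have "unif_sq_cauchy X (\<lambda>i x. if P i then a i x else 0)"
    by (rule unif_sq_cauchy_dominated[OF l2_imp_unif_sq_cauchy[OF X a] l2_imp_unif_sq_cauchy[OF X a], of 1])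
       (auto simp: sqmod_def)
  moreover have "(\<lambda>x. if P i then a i x else 0) \<in> cfun X" for i
    by (cases "P i") (simp_all add: l2D[OF a] cfun_zero)
  ultimately show ?thesis using l2_iff_unif_sq_cauchy[OF X] by auto
qed

lemma l2_finite_support:
  assumes "compact_space X" "\<And>i. b i \<in> cfun X" "\<And>i x. N \<le> i \<Longrightarrow> b i x = 0"
  shows "b \<in> l2 X"
  using l2_iff_unif_sq_cauchy[OF assms(1)] unif_sq_cauchy_finite_support[OF assms(3)] assms(2) by auto

lemma l2_zero: "compact_space X \<Longrightarrow> (\<lambda>i x. 0) \<in> l2 X"
  by (rule l2_finite_support) (simp_all add: cfun_zero)

lemma l2dualI:
  assumes "\<And>a. a \<notin> l2 X \<Longrightarrow> \<tau> a = (\<lambda>x. 0)"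
    and "\<And>a. a \<in> l2 X \<Longrightarrow> \<tau> a \<in> cfun X"
    and "\<And>a b. a \<in> l2 X \<Longrightarrow> b \<in> l2 X \<Longrightarrow> \<tau> (\<lambda>i x. a i x + b i x) = (\<lambda>x. \<tau> a x + \<tau> b x)"
    and "\<And>a f. a \<in> l2 X \<Longrightarrow> f \<in> cfun X \<Longrightarrow> \<tau> (l2act a f) = (\<lambda>x. \<tau> a x * f x)"
    and "\<And>a. a \<in> l2 X \<Longrightarrow> cnorm X (\<tau> a) \<le> C * l2norm X a"
  shows "\<tau> \<in> l2dual X"
  unfolding l2dual_def using assms by blast

lemma l2dualD:
  assumes "\<tau> \<in> l2dual X"
  shows "\<And>a. a \<notin> l2 X \<Longrightarrow> \<tau> a = (\<lambda>x. 0)"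
    and "\<And>a. a \<in> l2 X \<Longrightarrow> \<tau> a \<in> cfun X"
    and "\<And>a b. a \<in> l2 X \<Longrightarrow> b \<in> l2 X \<Longrightarrow> \<tau> (\<lambda>i x. a i x + b i x) = (\<lambda>x. \<tau> a x + \<tau> b x)"
    and "\<And>a f. a \<in> l2 X \<Longrightarrow> f \<in> cfun X \<Longrightarrow> \<tau> (l2act a f) = (\<lambda>x. \<tau> a x * f x)"
  using assms unfolding l2dual_def by auto

lemma l2dual_bound:
  assumes X: "compact_space X" and \<tau>: "\<tau> \<in> l2dual X"
  obtains C where "0 \<le> C" "\<And>a. a \<in> l2 X \<Longrightarrow> cnorm X (\<tau> a) \<le> C * l2norm X a"
proof -
  obtain C where C: "\<forall>a\<in>l2 X. cnorm X (\<tau> a) \<le> C * l2norm X a"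
    using \<tau> unfolding l2dual_def by auto
  have "cnorm X (\<tau> a) \<le> max C 0 * l2norm X a" if "a \<in> l2 X" for a
    using C that mult_right_mono[OF max.cobounded1[of C 0] l2norm_nonneg[OF X that]] by fastforce
  then show ?thesis using that[of "max C 0"] by simp
qed

lemma l2dual_zero_vec:
  assumes "compact_space X" "\<tau> \<in> l2dual X"
  shows "\<tau> (\<lambda>i x. 0) = (\<lambda>x. 0)"
  using l2dualD(3)[OF assms(2) l2_zero[OF assms(1)] l2_zero[OF assms(1)]] by (simp add: fun_eq_iff)

lemma zero_in_l2dual: "(\<lambda>a x. 0) \<in> l2dual X"
  by (rule l2dualI[where C=0]) (auto simp: cfun_zero cnorm_least)

lemma l2dual_add:
  assumes X: "compact_space X" and \<sigma>: "\<sigma> \<in> l2dual X" and \<tau>: "\<tau> \<in> l2dual X"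
  shows "(\<lambda>a x. \<sigma> a x + \<tau> a x) \<in> l2dual X"
proof -
  obtain C1 where C1: "\<And>a. a \<in> l2 X \<Longrightarrow> cnorm X (\<sigma> a) \<le> C1 * l2norm X a"
    using l2dual_bound[OF X \<sigma>] by blast
  obtain C2 where C2: "\<And>a. a \<in> l2 X \<Longrightarrow> cnorm X (\<tau> a) \<le> C2 * l2norm X a"
    using l2dual_bound[OF X \<tau>] by blast
  show ?thesis
  proof (rule l2dualI[where C="C1 + C2"])
    fix a assume a: "a \<in> l2 X"
    have "cnorm X (\<lambda>x. \<sigma> a x + \<tau> a x) \<le> cnorm X (\<sigma> a) + cnorm X (\<tau> a)"
      by (intro cnorm_add_le X cfun_continuous_map l2dualD(2)[OF \<sigma> a] l2dualD(2)[OF \<tau> a])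
    also have "\<dots> \<le> (C1 + C2) * l2norm X a" using C1[OF a] C2[OF a] by (simp add: distrib_right)
    finally show "cnorm X (\<lambda>x. \<sigma> a x + \<tau> a x) \<le> (C1 + C2) * l2norm X a" .
  qed (auto simp: l2dualD[OF \<sigma>] l2dualD[OF \<tau>] cfun_add algebra_simps)
qed

lemma l2dual_dact:
  assumes X: "compact_space X" and \<tau>: "\<tau> \<in> l2dual X" and f: "f \<in> cfun X"
  shows "dact \<tau> f \<in> l2dual X"
proof -
  obtain C where C: "0 \<le> C" "\<And>a. a \<in> l2 X \<Longrightarrow> cnorm X (\<tau> a) \<le> C * l2norm X a"
    using l2dual_bound[OF X \<tau>] by blast
  obtain B where B: "0 \<le> B" "\<And>x. cmod (f x) \<le> B" using cfun_bounded[OF X f] by blast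
  show ?thesis unfolding dact_def
  proof (rule l2dualI[where C="B * C"])
    fix a assume a: "a \<in> l2 X"
    have "cnorm X (\<lambda>x. cnj (f x) * \<tau> a x) \<le> B * cnorm X (\<tau> a)"
      by (rule cnorm_mult_le[OF X cfun_continuous_map[OF l2dualD(2)[OF \<tau> a]] B(1)]) (simp add: B(2))
    also have "\<dots> \<le> B * (C * l2norm X a)" using C(2)[OF a] B(1) by (rule mult_left_mono)
    finally show "cnorm X (\<lambda>x. cnj (f x) * \<tau> a x) \<le> B * C * l2norm X a" by (simp add: mult.assoc)
  next
    fix a assume a: "a \<in> l2 X"
    show "(\<lambda>x. cnj (f x) * \<tau> a x) \<in> cfun X"
      by (rule cfun_mult_left[OF continuous_map_cnj[OF cfun_continuous_map[OF f]] l2dualD(2)[OF \<tau> a]])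
  qed (auto simp: l2dualD[OF \<tau>] algebra_simps)
qed

definition coord :: "'a topology \<Rightarrow> nat \<Rightarrow> (nat \<Rightarrow> 'a \<Rightarrow> complex) \<Rightarrow> 'a \<Rightarrow> complex" where
  "coord X i a = (if a \<in> l2 X then a i else (\<lambda>x. 0))"

lemma coord_in_l2dual:
  assumes X: "compact_space X"
  shows "coord X i \<in> l2dual X"
proof (rule l2dualI[where C=1])
  fix a assume a: "a \<in> l2 X"
  show "cnorm X (coord X i a) \<le> 1 * l2norm X a"
    using a by (simp add: coord_def cnorm_least l2norm_nonneg[OF X a] coord_le_l2norm[OF X a])
next
  fix a f assume "a \<in> l2 X" "f \<in> cfun X"
  then show "coord X i (l2act a f) = (\<lambda>x. coord X i a x * f x)"
    using l2_act[OF X] by (simp add: coord_def l2act_def)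
next
  fix a b assume "a \<in> l2 X" "b \<in> l2 X"
  then show "coord X i (\<lambda>i x. a i x + b i x) = (\<lambda>x. coord X i a x + coord X i b x)"
    using l2_add[OF X] by (simp add: coord_def)
qed (auto simp: coord_def l2D)

definition dual_comb :: "'a topology \<Rightarrow> nat set \<Rightarrow> (nat \<Rightarrow> 'a \<Rightarrow> complex) \<Rightarrow>
    (nat \<Rightarrow> 'a \<Rightarrow> complex) \<Rightarrow> 'a \<Rightarrow> complex" where
  "dual_comb X I \<gamma> a = (if a \<in> l2 X then (\<lambda>x. \<Sum>i\<in>I. \<gamma> i x * a i x) else (\<lambda>x. 0))"

lemma dual_comb_empty: "dual_comb X {} \<gamma> = (\<lambda>a x. 0)"
  by (simp add: dual_comb_def fun_eq_iff)

lemma dual_comb_insert: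
  "i \<notin> I \<Longrightarrow> finite I \<Longrightarrow>
   dual_comb X (insert i I) \<gamma> = (\<lambda>a x. dual_comb X I \<gamma> a x + dact (coord X i) (\<lambda>x. cnj (\<gamma> i x)) a x)"
  by (auto simp: dual_comb_def dact_def coord_def fun_eq_iff)

lemma dual_comb_in_l2dual:
  assumes X: "compact_space X" and I: "finite I" and \<gamma>: "\<And>i. i \<in> I \<Longrightarrow> \<gamma> i \<in> cfun X"
  shows "dual_comb X I \<gamma> \<in> l2dual X"
  using I \<gamma>
proof (induction I rule: finite_induct)
  case empty
  then show ?case by (simp add: dual_comb_empty zero_in_l2dual)
next
  case (insert i I)
  then show ?case unfolding dual_comb_insert[OF insert(2,1)]
    by (intro l2dual_add X l2dual_dact coord_in_l2dual cfun_cnj) auto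
qed

section \<open>Elements of the bidual\<close>

lemma bidual_cfun: "F \<in> l2bidual X \<Longrightarrow> \<tau> \<in> l2dual X \<Longrightarrow> F \<tau> \<in> cfun X"
  unfolding l2bidual_def by auto

lemma bidual_add:
  "F \<in> l2bidual X \<Longrightarrow> \<sigma> \<in> l2dual X \<Longrightarrow> \<tau> \<in> l2dual X \<Longrightarrow>
   F (\<lambda>a x. \<sigma> a x + \<tau> a x) = (\<lambda>x. F \<sigma> x + F \<tau> x)"
  unfolding l2bidual_def by auto

lemma bidual_dact:
  "F \<in> l2bidual X \<Longrightarrow> \<tau> \<in> l2dual X \<Longrightarrow> f \<in> cfun X \<Longrightarrow> F (dact \<tau> f) = (\<lambda>x. F \<tau> x * f x)"
  unfolding l2bidual_def by auto

lemma bidual_zero: "F \<in> l2bidual X \<Longrightarrow> F (\<lambda>a x. 0) = (\<lambda>x. 0)"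
  using bidual_add[OF _ zero_in_l2dual zero_in_l2dual, of F X] by (simp add: fun_eq_iff)

lemma dnorm_le:
  assumes "0 \<le> D" "\<And>a. a \<in> l2 X \<Longrightarrow> cnorm X (\<tau> a) \<le> D * l2norm X a"
  shows "dnorm X \<tau> \<le> D"
  unfolding dnorm_def by (rule cInf_lower) (use assms in \<open>auto intro: bdd_belowI[of _ 0]\<close>)

lemma dnorm_nonneg:
  assumes X: "compact_space X" and \<tau>: "\<tau> \<in> l2dual X"
  shows "0 \<le> dnorm X \<tau>"
proof -
  obtain C where "0 \<le> C" "\<And>a. a \<in> l2 X \<Longrightarrow> cnorm X (\<tau> a) \<le> C * l2norm X a"
    using l2dual_bound[OF X \<tau>] by blast
  then show ?thesis unfolding dnorm_def by (intro cInf_greatest) auto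
qed

lemma bidual_bound:
  assumes X: "compact_space X" and F: "F \<in> l2bidual X"
  obtains C where "0 \<le> C" "\<And>\<tau>. \<tau> \<in> l2dual X \<Longrightarrow> cnorm X (F \<tau>) \<le> C * dnorm X \<tau>"
proof -
  obtain C where C: "\<forall>\<tau>\<in>l2dual X. cnorm X (F \<tau>) \<le> C * dnorm X \<tau>"
    using F unfolding l2bidual_def by auto
  have "cnorm X (F \<tau>) \<le> max C 0 * dnorm X \<tau>" if "\<tau> \<in> l2dual X" for \<tau>
    using C that mult_right_mono[OF max.cobounded1[of C 0] dnorm_nonneg[OF X that]] by fastforce
  then show ?thesis using that[of "max C 0"] by simp
qed

lemma bidual_dual_comb:
  assumes X: "compact_space X" and I: "finite I" and \<gamma>: "\<And>i. i \<in> I \<Longrightarrow> \<gamma> i \<in> cfun X"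
    and F: "F \<in> l2bidual X"
  shows "F (dual_comb X I \<gamma>) = (\<lambda>x. \<Sum>i\<in>I. F (coord X i) x * cnj (\<gamma> i x))"
  using I \<gamma>
proof (induction I rule: finite_induct)
  case empty
  then show ?case by (simp add: dual_comb_empty bidual_zero[OF F])
next
  case (insert i I)
  have \<gamma>i: "(\<lambda>x. cnj (\<gamma> i x)) \<in> cfun X" using insert.prems by (simp add: cfun_cnj)
  have \<gamma>I: "\<And>j. j \<in> I \<Longrightarrow> \<gamma> j \<in> cfun X" using insert.prems by simp
  have "F (dual_comb X (insert i I) \<gamma>)
      = (\<lambda>x. F (dual_comb X I \<gamma>) x + F (dact (coord X i) (\<lambda>x. cnj (\<gamma> i x))) x)"
    unfolding dual_comb_insert[OF insert(2,1)]
    by (rule bidual_add[OF F dual_comb_in_l2dual[OF X insert(1) \<gamma>I]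
          l2dual_dact[OF X coord_in_l2dual[OF X] \<gamma>i]])
  then show ?case
    using insert.IH[OF \<gamma>I] insert(1,2) bidual_dact[OF F coord_in_l2dual[OF X] \<gamma>i]
    by (simp add: add.commute)
qed

lemma norm_dual_comb_le:
  assumes "a \<in> l2 X"
  shows "cmod (dual_comb X I \<gamma> a x) \<le> sqrt (\<Sum>i\<in>I. (cmod (\<gamma> i x))\<^sup>2) * sqrt (sum (sqmod a x) I)"
  using cauchy_schwarz_complex[of "\<lambda>i. \<gamma> i x" "\<lambda>i. a i x" I] assms
  by (simp add: dual_comb_def sqmod_def)

lemma dnorm_dual_comb:
  assumes X: "compact_space X" and I: "finite I" and M: "0 \<le> M"
    and bound: "\<And>x. x \<in> topspace X \<Longrightarrow> (\<Sum>i\<in>I. (cmod (\<gamma> i x))\<^sup>2) \<le> M"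
  shows "dnorm X (dual_comb X I \<gamma>) \<le> sqrt M"
proof (rule dnorm_le)
  show "0 \<le> sqrt M" using M by simp
  fix a assume a: "a \<in> l2 X"
  obtain n where n: "I \<subseteq> {..<n}" using I by (meson finite_nat_iff_bounded)
  show "cnorm X (dual_comb X I \<gamma> a) \<le> sqrt M * l2norm X a"
  proof (rule cnorm_least)
    show "0 \<le> sqrt M * l2norm X a" using M l2norm_nonneg[OF X a] by simp
    fix x assume x: "x \<in> topspace X"
    have "sum (sqmod a x) I \<le> sum (sqmod a x) {0..<n}"
      by (rule sum_mono2) (use n in \<open>auto simp: sqmod_nonneg\<close>)
    then have a_le: "sqrt (sum (sqmod a x) I) \<le> l2norm X a"
      using sqrt_sum_sqmod_le_l2norm[OF X a x, of 0 n] real_sqrt_le_mono order_trans by blast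
    have \<gamma>_le: "sqrt (\<Sum>i\<in>I. (cmod (\<gamma> i x))\<^sup>2) \<le> sqrt M" using bound[OF x] by simp
    show "cmod (dual_comb X I \<gamma> a x) \<le> sqrt M * l2norm X a"
      by (rule order_trans[OF norm_dual_comb_le[OF a, of I \<gamma> x] mult_mono[OF \<gamma>_le a_le]])
         (simp_all add: M sum_nonneg sqmod_nonneg)
  qed
qed

lemma bidual_local:
  assumes X: "compact_space X" "Hausdorff_space X" and F: "F \<in> l2bidual X"
    and \<sigma>: "\<sigma> \<in> l2dual X" and \<tau>: "\<tau> \<in> l2dual X" and V: "openin X V" "x \<in> V"
    and agree: "\<And>a y. y \<in> V \<Longrightarrow> \<sigma> a y = \<tau> a y"
  shows "F \<sigma> x = F \<tau> x"
proof -
  obtain f where f: "f \<in> cfun X" "f x = 1" "\<And>y. y \<notin> V \<Longrightarrow> f y = 0"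
    using urysohn_cfun[OF X V] by metis
  have "dact \<sigma> f = dact \<tau> f"
    using agree f(3) by (auto simp: dact_def fun_eq_iff)
  then have "F \<sigma> x * f x = F \<tau> x * f x"
    using bidual_dact[OF F \<sigma> f(1)] bidual_dact[OF F \<tau> f(1)] by metis
  then show ?thesis using f(2) by simp
qed

section \<open>The coefficients of an element of the bidual\<close>

lemma le_square_if_le_mult_sqrt:
  fixes M D :: real
  assumes "0 \<le> M" "0 \<le> D" "M \<le> D * sqrt M"
  shows "M \<le> D\<^sup>2"
proof (cases "M = 0")
  case False
  then have "sqrt M * sqrt M \<le> D * sqrt M" using assms by simp
  then have "sqrt M \<le> D"
    using mult_right_le_imp_le[of "sqrt M" "sqrt M" D] False assms(1) by simp
  then show ?thesis using assms(1) by (metis real_sqrt_le_iff real_sqrt_pow2 power_mono real_sqrt_ge_zero)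
qed (use assms in simp)

lemma le_cnorm_of_real:
  assumes "compact_space X" "continuous_map X euclidean (\<lambda>x. complex_of_real (S x))"
    "x \<in> topspace X" "0 \<le> S x"
  shows "S x \<le> cnorm X (\<lambda>x. complex_of_real (S x))"
  using cnorm_upper[OF assms(1-3)] assms(4) by simp

lemma bidual_coord_sq_bounded:
  assumes X: "compact_space X" and F: "F \<in> l2bidual X"
  obtains K where "0 \<le> K"
    "\<And>x n. x \<in> topspace X \<Longrightarrow> sum (sqmod (\<lambda>i. F (coord X i)) x) {..<n} \<le> K"
proof -
  define c where "c i = F (coord X i)" for i
  have c: "c i \<in> cfun X" for i unfolding c_def by (rule bidual_cfun[OF F coord_in_l2dual[OF X]])
  obtain C where C: "0 \<le> C" "\<And>\<tau>. \<tau> \<in> l2dual X \<Longrightarrow> cnorm X (F \<tau>) \<le> C * dnorm X \<tau>"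
    using bidual_bound[OF X F] by blast
  \<comment> \<open>F maps the combination of the first n coordinate functionals with coefficients cnj c i
    to S, while that functional has norm at most the square root of the supremum of S.\<close>
  have "sum (sqmod c x) {..<n} \<le> C\<^sup>2" if x: "x \<in> topspace X" for x n
  proof -
    define S where "S x = sum (sqmod c x) {..<n}" for x
    have \<tau>: "dual_comb X {..<n} c \<in> l2dual X" by (rule dual_comb_in_l2dual[OF X]) (auto simp: c)
    have "F (dual_comb X {..<n} c) = (\<lambda>x. \<Sum>i<n. c i x * cnj (c i x))"
      using bidual_dual_comb[of X "{..<n}" c F] X c F by (simp add: c_def)
    then have F\<tau>: "F (dual_comb X {..<n} c) = (\<lambda>x. complex_of_real (S x))"
      by (simp only: sum_mult_cnj_self) (simp add: S_def sqmod_def)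
    define M where "M = cnorm X (\<lambda>x. complex_of_real (S x))"
    have S_cont: "continuous_map X euclidean (\<lambda>x. complex_of_real (S x))"
      using bidual_cfun[OF F \<tau>] F\<tau> cfun_continuous_map by metis
    have S_le: "S y \<le> M" if "y \<in> topspace X" for y
      unfolding M_def by (rule le_cnorm_of_real[OF X S_cont that]) (simp add: S_def sum_nonneg sqmod_nonneg)
    have M: "0 \<le> M" unfolding M_def by (rule cnorm_nonneg[OF X S_cont])
    have "dnorm X (dual_comb X {..<n} c) \<le> sqrt M"
      by (rule dnorm_dual_comb[OF X _ M]) (use S_le in \<open>auto simp: S_def sqmod_def\<close>)
    then have "M \<le> C * sqrt M"
      using C(2)[OF \<tau>] C(1) unfolding F\<tau> M_def[symmetric] by (meson mult_left_mono order_trans)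
    then have "M \<le> C\<^sup>2" using le_square_if_le_mult_sqrt M C(1) by blast
    then show ?thesis using S_le[OF x] unfolding S_def by linarith
  qed
  then show ?thesis using that[of "C\<^sup>2"] unfolding c_def by simp
qed

section \<open>Gluing functionals with disjoint supports\<close>

text \<open>Off the union of the U k the choice of index is arbitrary; this is harmless because
  the glued functionals will vanish outside their U k.\<close>

definition glue :: "(nat \<Rightarrow> 'a set) \<Rightarrow> (nat \<Rightarrow> (nat \<Rightarrow> 'a \<Rightarrow> complex) \<Rightarrow> 'a \<Rightarrow> complex)
    \<Rightarrow> (nat \<Rightarrow> 'a \<Rightarrow> complex) \<Rightarrow> 'a \<Rightarrow> complex" where
  "glue U \<phi> a y = \<phi> (SOME k. y \<in> U k) a y"

lemma glue_eq:
  assumes "\<And>i j. i \<noteq> j \<Longrightarrow> U i \<inter> U j = {}" "y \<in> U k"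
  shows "glue U \<phi> a y = \<phi> k a y"
proof -
  have "y \<in> U (SOME k. y \<in> U k)" using assms(2) by (rule someI)
  then have "(SOME k. y \<in> U k) = k" using assms by blast
  then show ?thesis by (simp add: glue_def)
qed

lemma glue_outside:
  "(\<And>k. y \<notin> U k) \<Longrightarrow> (\<And>k. y \<notin> U k \<Longrightarrow> \<phi> k a y = 0) \<Longrightarrow> glue U \<phi> a y = 0"
  by (simp add: glue_def)

locale disjoint_functionals =
  fixes X :: "'a topology" and U :: "nat \<Rightarrow> 'a set"
    and \<phi> :: "nat \<Rightarrow> (nat \<Rightarrow> 'a \<Rightarrow> complex) \<Rightarrow> 'a \<Rightarrow> complex"
    and n m :: "nat \<Rightarrow> nat" and C :: real
  assumes compact: "compact_space X"
    and dual: "\<And>k. \<phi> k \<in> l2dual X"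
    and disjoint: "\<And>i j. i \<noteq> j \<Longrightarrow> U i \<inter> U j = {}"
    and support: "\<And>k a y. y \<notin> U k \<Longrightarrow> \<phi> k a y = 0"
    and block_bound: "\<And>k a y. a \<in> l2 X \<Longrightarrow> y \<in> topspace X \<Longrightarrow>
       cmod (\<phi> k a y) \<le> C * sqrt (sum (sqmod a y) {n k..<m k})"
    and blocks_escape: "\<And>k. k \<le> n k"
    and C_nonneg: "0 \<le> C"
begin

lemma glue_cases:
  obtains k where "glue U \<phi> a y = \<phi> k a y" "\<And>j. j \<noteq> k \<Longrightarrow> \<phi> j a y = 0"
proof (cases "\<exists>k. y \<in> U k")
  case True
  then obtain k where k: "y \<in> U k" by blast
  show ?thesis
  proof (rule that[of k])
    show "glue U \<phi> a y = \<phi> k a y" by (rule glue_eq[where U=U, OF disjoint k])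
    fix j assume "j \<noteq> k"
    then have "y \<notin> U j" using disjoint[of j k] k by blast
    then show "\<phi> j a y = 0" by (rule support)
  qed
next
  case False
  then have "\<And>j. y \<notin> U j" by blast
  then show ?thesis using that[of 0] glue_outside[of y U \<phi> a] support by presburger
qed

lemma glue_partial_sums:
  assumes a: "a \<in> l2 X" and y: "y \<in> topspace X"
    and tail: "\<And>j m'. N \<le> j \<Longrightarrow> sum (sqmod a y) {j..<m'} \<le> d"
  shows "cmod ((\<Sum>k<N. \<phi> k a y) - glue U \<phi> a y) \<le> C * sqrt d"
proof -
  have d: "0 \<le> d" using tail[of N N] by simp
  obtain k where k: "glue U \<phi> a y = \<phi> k a y" "\<And>j. j \<noteq> k \<Longrightarrow> \<phi> j a y = 0"
    using glue_cases[of a y] by metis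
  have "(\<Sum>j<N. \<phi> j a y) = (\<Sum>j<N. if j = k then \<phi> k a y else 0)"
    using k(2) by (intro sum.cong) auto
  then have sum_eq: "(\<Sum>j<N. \<phi> j a y) = (if k < N then \<phi> k a y else 0)" by simp
  show ?thesis
  proof (cases "k < N")
    case False
    then have "sum (sqmod a y) {n k..<m k} \<le> d" using blocks_escape[of k] by (intro tail) simp
    then have "cmod (\<phi> k a y) \<le> C * sqrt d"
      using block_bound[OF a y, of k] C_nonneg by (meson mult_left_mono order_trans real_sqrt_le_iff)
    then show ?thesis using False sum_eq k(1) by simp
  qed (use sum_eq k(1) C_nonneg d in simp)
qed

lemma glue_cfun:
  assumes a: "a \<in> l2 X"
  shows "glue U \<phi> a \<in> cfun X"
proof (rule cfunI)
  show "continuous_map X euclidean (glue U \<phi> a)"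
  proof (rule continuous_map_uniform_limit_sequentially)
    show "continuous_map X euclidean (\<lambda>y. \<Sum>k<N. \<phi> k a y)" for N
      by (intro cfun_continuous_map cfun_sum finite_lessThan l2dualD(2)[OF dual a])
    fix e :: real assume "e > 0"
    define d where "d = (e / (C + 1))\<^sup>2"
    have "0 < d" unfolding d_def using \<open>e > 0\<close> C_nonneg by simp
    then obtain N where N: "\<And>j m' y. N \<le> j \<Longrightarrow> y \<in> topspace X \<Longrightarrow> sum (sqmod a y) {j..<m'} \<le> d"
      using l2_imp_unif_sq_cauchy[OF compact a] unfolding unif_sq_cauchy_def by blast
    have "C * sqrt d \<le> e"
      using \<open>e > 0\<close> C_nonneg by (simp add: d_def divide_le_eq algebra_simps)
    then have "norm ((\<Sum>k<n'. \<phi> k a y) - glue U \<phi> a y) \<le> e"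
      if "N \<le> n'" "y \<in> topspace X" for n' y
      using glue_partial_sums[OF a that(2), of n' d] N that by force
    then show "\<exists>N. \<forall>n\<ge>N. \<forall>y\<in>topspace X. norm ((\<Sum>k<n. \<phi> k a y) - glue U \<phi> a y) \<le> e"
      by blast
  qed
next
  fix y assume "y \<notin> topspace X"
  moreover obtain k where "glue U \<phi> a y = \<phi> k a y" by (rule glue_cases[of a y])
  ultimately show "glue U \<phi> a y = 0" using cfun_outside[OF l2dualD(2)[OF dual a]] by simp
qed

lemma glue_in_l2dual: "glue U \<phi> \<in> l2dual X"
proof (rule l2dualI[where C=C])
  fix a assume a: "a \<in> l2 X"
  show "cnorm X (glue U \<phi> a) \<le> C * l2norm X a"
  proof (rule cnorm_least)
    show "0 \<le> C * l2norm X a" using C_nonneg l2norm_nonneg[OF compact a] by simp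
    fix y assume y: "y \<in> topspace X"
    obtain k where "glue U \<phi> a y = \<phi> k a y" by (rule glue_cases[of a y])
    then show "cmod (glue U \<phi> a y) \<le> C * l2norm X a"
      using block_bound[OF a y, of k] sqrt_sum_sqmod_le_l2norm[OF compact a y, of "n k" "m k"] C_nonneg
      by (metis mult_left_mono order_trans)
  qed
qed (auto simp: glue_def fun_eq_iff l2dualD[OF dual] glue_cfun)

end

section \<open>Large blocks of coefficients give canonical inclusions\<close>

lemma C0_divide:
  assumes lam: "lam \<in> C0 X U" and B: "\<And>x. cmod (lam x) \<le> B"
    and h: "continuous_map X euclidean h" and e: "0 < e" and large: "\<And>x. x \<in> U \<Longrightarrow> e \<le> h x"
  obtains q where "q \<in> cfun X" "\<And>x. cmod (q x) \<le> B / e" "\<And>x. x \<notin> U \<Longrightarrow> q x = 0"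
    "\<And>x. q x * complex_of_real (h x) = lam x"
proof -
  have lam_cfun: "lam \<in> cfun X" and lam0: "\<And>x. x \<notin> U \<Longrightarrow> lam x = 0"
    using lam cfun_outside[of lam X] by (auto simp: C0_def)
  \<comment> \<open>Dividing by max h e rather than h keeps q continuous; on U the two agree.\<close>
  define q where "q x = lam x / complex_of_real (max (h x) e)" for x
  show ?thesis
  proof (rule that[of q])
    show "q \<in> cfun X"
    proof (rule cfunI)
      show "continuous_map X euclidean q" unfolding q_def using e
        by (intro continuous_map_divide cfun_continuous_map[OF lam_cfun] continuous_map_of_real
            continuous_map_real_max h continuous_map_const[THEN iffD2]) auto
    qed (simp add: q_def cfun_outside[OF lam_cfun])
    show "cmod (q x) \<le> B / e" for x
    proof -
      have "cmod (q x) = cmod (lam x) / max (h x) e" using e by (simp add: q_def norm_divide)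
      also have "\<dots> \<le> B / e"
        using B[of x] e order_trans[OF norm_ge_zero B[of x]] by (intro frac_le) auto
      finally show ?thesis .
    qed
    show "q x = 0" if "x \<notin> U" for x using lam0[OF that] by (simp add: q_def)
    show "q x * complex_of_real (h x) = lam x" for x
    proof (cases "x \<in> U")
      case True
      then have "max (h x) e = h x" using large[OF True] by simp
      then show ?thesis using e by (simp add: q_def)
    qed (simp add: q_def lam0)
  qed
qed

lemma block_functional:
  assumes X: "compact_space X" and F: "F \<in> l2bidual X"
    and K: "0 \<le> K" "\<And>x n. x \<in> topspace X \<Longrightarrow> sum (sqmod (\<lambda>i. F (coord X i)) x) {..<n} \<le> K"
    and e: "0 < e" and large: "\<And>x. x \<in> U \<Longrightarrow> e \<le> sum (sqmod (\<lambda>i. F (coord X i)) x) {n..<m}"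
    and lam: "lam \<in> C0 X U" and B: "0 \<le> B" "\<And>x. cmod (lam x) \<le> B"
  obtains \<phi> where "\<phi> \<in> l2dual X" "F \<phi> = lam" "\<And>a y. y \<notin> U \<Longrightarrow> \<phi> a y = 0"
    "\<And>a y. a \<in> l2 X \<Longrightarrow> y \<in> topspace X \<Longrightarrow>
       cmod (\<phi> a y) \<le> B / e * sqrt K * sqrt (sum (sqmod a y) {n..<m})"
proof -
  define c where "c = (\<lambda>i. F (coord X i))"
  have c: "c i \<in> cfun X" for i unfolding c_def by (rule bidual_cfun[OF F coord_in_l2dual[OF X]])
  define h where "h x = sum (sqmod c x) {n..<m}" for x
  have h_le: "h x \<le> K" if "x \<in> topspace X" for x
  proof -
    have "h x \<le> sum (sqmod c x) {..<m}" unfolding h_def by (rule sum_mono2) (auto simp: sqmod_nonneg)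
    then show ?thesis using K(2)[OF that, of m] unfolding c_def by linarith
  qed
  have "continuous_map X euclidean h" unfolding h_def by (rule continuous_map_sum_sqmod[OF c])
  moreover have "e \<le> h x" if "x \<in> U" for x using large[OF that] by (simp add: h_def c_def)
  ultimately obtain q where q: "q \<in> cfun X" "\<And>x. cmod (q x) \<le> B / e" "\<And>x. x \<notin> U \<Longrightarrow> q x = 0"
    "\<And>x. q x * complex_of_real (h x) = lam x"
    using C0_divide[OF lam B(2) _ e] by metis
  define \<gamma> where "\<gamma> i x = cnj (q x) * c i x" for i x
  have \<gamma>: "\<gamma> i \<in> cfun X" for i
    unfolding \<gamma>_def by (rule cfun_mult_left[OF continuous_map_cnj[OF cfun_continuous_map[OF q(1)]] c])
  define \<phi> where "\<phi> = dual_comb X {n..<m} \<gamma>"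
  show ?thesis
  proof (rule that[of \<phi>])
    show "\<phi> \<in> l2dual X" unfolding \<phi>_def by (rule dual_comb_in_l2dual[OF X]) (auto simp: \<gamma>)
    have "F \<phi> = (\<lambda>x. \<Sum>i\<in>{n..<m}. c i x * cnj (\<gamma> i x))"
      using bidual_dual_comb[of X "{n..<m}" \<gamma> F] X \<gamma> F by (simp add: \<phi>_def c_def)
    also have "\<dots> = (\<lambda>x. q x * (\<Sum>i\<in>{n..<m}. c i x * cnj (c i x)))"
      unfolding \<gamma>_def by (simp add: sum_distrib_left mult_ac)
    also have "\<dots> = (\<lambda>x. q x * complex_of_real (h x))"
      by (simp only: sum_mult_cnj_self) (simp add: h_def sqmod_def)
    finally show "F \<phi> = lam" using q(4) by (simp add: fun_eq_iff)
    show "\<phi> a y = 0" if "y \<notin> U" for a y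
      using q(3)[OF that] by (simp add: \<phi>_def dual_comb_def \<gamma>_def)
    fix a y assume a: "a \<in> l2 X" and y: "y \<in> topspace X"
    have "(\<Sum>i\<in>{n..<m}. (cmod (\<gamma> i y))\<^sup>2) = (cmod (q y))\<^sup>2 * h y"
      unfolding \<gamma>_def h_def sqmod_def by (simp add: norm_mult power_mult_distrib sum_distrib_left)
    also have "\<dots> \<le> (B / e)\<^sup>2 * K"
      using q(2)[of y] h_le[OF y] by (intro mult_mono power_mono) (auto simp: h_def sum_nonneg sqmod_nonneg)
    finally have "sqrt (\<Sum>i\<in>{n..<m}. (cmod (\<gamma> i y))\<^sup>2) \<le> sqrt ((B / e)\<^sup>2 * K)" by simp
    also have "\<dots> = B / e * sqrt K" using B(1) e by (simp add: real_sqrt_mult)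
    finally have \<gamma>_le: "sqrt (\<Sum>i\<in>{n..<m}. (cmod (\<gamma> i y))\<^sup>2) \<le> B / e * sqrt K" .
    show "cmod (\<phi> a y) \<le> B / e * sqrt K * sqrt (sum (sqmod a y) {n..<m})"
      using norm_dual_comb_le[OF a, of "{n..<m}" \<gamma> y]
        mult_right_mono[OF \<gamma>_le real_sqrt_ge_zero[OF sum_nonneg[of "{n..<m}" "sqmod a y", OF sqmod_nonneg]]]
      unfolding \<phi>_def by linarith
  qed
qed

lemma prod_canon_incl_from_blocks:
  assumes X: "compact_space X" "Hausdorff_space X" and F: "F \<in> l2bidual X"
    and K: "0 \<le> K" "\<And>x n. x \<in> topspace X \<Longrightarrow> sum (sqmod (\<lambda>i. F (coord X i)) x) {..<n} \<le> K"
    and e: "0 < e" and U: "\<And>k. openin X (U k)" "\<And>i j. i \<noteq> j \<Longrightarrow> U i \<inter> U j = {}"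
    and escape: "\<And>k. k \<le> n k"
    and large: "\<And>k x. x \<in> U k \<Longrightarrow> e \<le> sum (sqmod (\<lambda>i. F (coord X i)) x) {n k..<m k}"
  shows "prod_canon_incl X U"
  unfolding prod_canon_incl_def
proof (intro allI impI)
  fix lam :: "nat \<Rightarrow> 'a \<Rightarrow> complex"
  assume "(\<forall>k. lam k \<in> C0 X (U k)) \<and> (\<exists>B. \<forall>k. cnorm X (lam k) \<le> B)"
  then obtain B where lam: "\<And>k. lam k \<in> C0 X (U k)" and B: "\<And>k. cnorm X (lam k) \<le> B" by blast
  have lam_le: "cmod (lam k x) \<le> B" for k x
    using cfun_norm_le[OF X(1) _ B] lam by (simp add: C0_def)
  have B0: "0 \<le> B" using lam_le[of 0 undefined] norm_ge_zero order_trans by blast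
  have "\<exists>\<phi>. \<phi> \<in> l2dual X \<and> F \<phi> = lam k \<and> (\<forall>a y. y \<notin> U k \<longrightarrow> \<phi> a y = 0) \<and>
      (\<forall>a y. a \<in> l2 X \<longrightarrow> y \<in> topspace X \<longrightarrow>
         cmod (\<phi> a y) \<le> B / e * sqrt K * sqrt (sum (sqmod a y) {n k..<m k}))" for k
  proof -
    obtain \<phi> where "\<phi> \<in> l2dual X" "F \<phi> = lam k" "\<And>a y. y \<notin> U k \<Longrightarrow> \<phi> a y = 0"
      "\<And>a y. a \<in> l2 X \<Longrightarrow> y \<in> topspace X \<Longrightarrow>
         cmod (\<phi> a y) \<le> B / e * sqrt K * sqrt (sum (sqmod a y) {n k..<m k})"
      using block_functional[of X F K e "U k" "n k" "m k" "lam k" B] X(1) F K e large lam B0 lam_le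
      by blast
    then show ?thesis by blast
  qed
  then obtain \<phi> where \<phi>: "\<And>k. \<phi> k \<in> l2dual X" "\<And>k. F (\<phi> k) = lam k"
      "\<And>k a y. y \<notin> U k \<Longrightarrow> \<phi> k a y = 0"
      "\<And>k a y. a \<in> l2 X \<Longrightarrow> y \<in> topspace X \<Longrightarrow>
         cmod (\<phi> k a y) \<le> B / e * sqrt K * sqrt (sum (sqmod a y) {n k..<m k})"
    by metis
  interpret disjoint_functionals X U \<phi> n m "B / e * sqrt K"
    using X(1) \<phi>(1,3,4) U(2) escape B0 e K(1) by unfold_locales auto
  have glue: "glue U \<phi> \<in> l2dual X" by (rule glue_in_l2dual)
  show "\<exists>g\<in>cfun X. (\<forall>k. \<forall>x\<in>U k. g x = lam k x) \<and>
      (\<forall>x\<in>topspace X - X closure_of (\<Union>k. U k). g x = 0)"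
  proof (intro bexI conjI allI ballI)
    show "F (glue U \<phi>) \<in> cfun X" by (rule bidual_cfun[OF F glue])
    fix k x assume "x \<in> U k"
    then have "F (glue U \<phi>) x = F (\<phi> k) x"
      by (rule bidual_local[OF X F glue \<phi>(1) U(1)]) (rule glue_eq[OF U(2)])
    then show "F (glue U \<phi>) x = lam k x" using \<phi>(2) by simp
  next
    fix x assume x: "x \<in> topspace X - X closure_of (\<Union>k. U k)"
    have off_U: "y \<notin> U k" if "y \<in> topspace X - X closure_of (\<Union>k. U k)" for y k
      using that closure_of_subset[of "\<Union>k. U k" X] openin_subset[OF U(1)] by blast
    have "F (glue U \<phi>) x = F (\<lambda>a x. 0) x"
      by (rule bidual_local[OF X F glue zero_in_l2dual _ x])
         (auto simp: openin_diff closedin_closure_of intro!: glue_outside off_U \<phi>(3))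
    then show "F (glue U \<phi>) x = 0" using bidual_zero[OF F] by simp
  qed
qed

section \<open>Coefficients that are not uniformly square summable\<close>

definition large_tails :: "(nat \<Rightarrow> 'a \<Rightarrow> complex) \<Rightarrow> real \<Rightarrow> 'a set \<Rightarrow> bool" where
  "large_tails c d R \<longleftrightarrow> (\<forall>N. \<exists>n\<ge>N. \<exists>m. \<exists>x\<in>R. d < sum (sqmod c x) {n..<m})"

lemma large_tails_concentrate:
  assumes X: "compact_space X" and R: "R \<subseteq> topspace X" and large: "large_tails c d R"
  obtains y where "y \<in> topspace X" "\<And>W. openin X W \<Longrightarrow> y \<in> W \<Longrightarrow> large_tails c d (R \<inter> W)"
proof (rule ccontr)
  assume "\<not> thesis"
  then have "\<forall>y\<in>topspace X. \<exists>W N. openin X W \<and> y \<in> W \<and>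
      (\<forall>n\<ge>N. \<forall>m. \<forall>x\<in>R \<inter> W. sum (sqmod c x) {n..<m} \<le> d)"
    using that unfolding large_tails_def by (metis not_le)
  then obtain W N where WN: "\<And>y. y \<in> topspace X \<Longrightarrow> openin X (W y) \<and> y \<in> W y \<and>
      (\<forall>n\<ge>N y. \<forall>m. \<forall>x\<in>R \<inter> W y. sum (sqmod c x) {n..<m} \<le> d)"
    by metis
  have "compactin X (topspace X)" using X by (simp add: compact_space_def)
  moreover have "topspace X \<subseteq> \<Union>(W ` topspace X)" using WN by blast
  ultimately obtain \<V> where \<V>: "finite \<V>" "\<V> \<subseteq> W ` topspace X" "topspace X \<subseteq> \<Union>\<V>"
    unfolding compactin_def using WN by (metis (no_types, lifting) imageE)
  then obtain Y where Y: "Y \<subseteq> topspace X" "finite Y" "\<V> = W ` Y"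
    by (meson finite_subset_image)
  obtain n m x where nmx: "(\<Sum>y\<in>Y. N y) \<le> n" "x \<in> R" "d < sum (sqmod c x) {n..<m}"
    using large unfolding large_tails_def by blast
  then obtain y where y: "y \<in> Y" "x \<in> W y" using \<V>(3) Y(3) R by blast
  have "N y \<le> n" using member_le_sum[of y Y N] y(1) Y(2) nmx(1) by simp
  then have "sum (sqmod c x) {n..<m} \<le> d" using WN[of y] Y(1) y nmx(2) by blast
  then show False using nmx(3) by simp
qed

lemma large_tails_split:
  assumes X: "compact_space X" "Hausdorff_space X" and c: "\<And>i. c i \<in> cfun X"
    and summable: "\<And>x. x \<in> topspace X \<Longrightarrow> summable (sqmod c x)"
    and d: "0 < d" and R: "openin X R" and large: "large_tails c d R"
  obtains n m V R' where "N \<le> n" "openin X V" "V \<noteq> {}" "V \<subseteq> R" "openin X R'" "R' \<subseteq> R"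
    "V \<inter> R' = {}" "large_tails c d R'" "\<And>x. x \<in> V \<Longrightarrow> d / 2 \<le> sum (sqmod c x) {n..<m}"
proof -
  have RT: "R \<subseteq> topspace X" using R openin_subset by blast
  obtain y where y: "y \<in> topspace X" "\<And>W. openin X W \<Longrightarrow> y \<in> W \<Longrightarrow> large_tails c d (R \<inter> W)"
    using large_tails_concentrate[OF X(1) RT large] by metis
  obtain N1 where N1: "\<And>n m. N1 \<le> n \<Longrightarrow> norm (sum (sqmod c y) {n..<m}) < d / 2"
    using summable[OF y(1)] d unfolding summable_Cauchy by (meson half_gt_zero)
  obtain n m x where nmx: "max N N1 \<le> n" "x \<in> R" "d < sum (sqmod c x) {n..<m}"
    using large unfolding large_tails_def by blast
  \<comment> \<open>The tail at x is large while the tail at y is small, so x and y can be separated.\<close>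
  have "x \<noteq> y" using N1[of n m] nmx by fastforce
  then obtain Ox Oy where O: "openin X Ox" "openin X Oy" "x \<in> Ox" "y \<in> Oy" "disjnt Ox Oy"
    using X(2) RT nmx(2) y(1) unfolding Hausdorff_space_def by (metis subsetD)
  define G where "G = {z \<in> topspace X. sum (sqmod c z) {n..<m} \<in> {d/2<..}}"
  have G: "openin X G" unfolding G_def
    by (rule openin_continuous_map_preimage[OF continuous_map_sum_sqmod[OF c]]) simp
  show ?thesis
  proof (rule that[of n "Ox \<inter> R \<inter> G" "R \<inter> Oy" m])
    show "N \<le> n" using nmx(1) by simp
    show "openin X (Ox \<inter> R \<inter> G)" using O(1) R G by (intro openin_Int)
    have "x \<in> G" using nmx(2,3) RT d unfolding G_def by auto
    then show "Ox \<inter> R \<inter> G \<noteq> {}" using O(3) nmx(2) by blast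
    show "openin X (R \<inter> Oy)" using R O(2) by (rule openin_Int)
    show "Ox \<inter> R \<inter> G \<inter> (R \<inter> Oy) = {}" using O(5) by (auto simp: disjnt_def)
    show "large_tails c d (R \<inter> Oy)" by (rule y(2)[OF O(2,4)])
    show "d / 2 \<le> sum (sqmod c z) {n..<m}" if "z \<in> Ox \<inter> R \<inter> G" for z
      using that unfolding G_def by simp
  qed auto
qed

lemma disjoint_blocks:
  assumes X: "compact_space X" "Hausdorff_space X" and c: "\<And>i. c i \<in> cfun X"
    and summable: "\<And>x. x \<in> topspace X \<Longrightarrow> summable (sqmod c x)"
    and not_uc: "\<not> unif_sq_cauchy X c"
  obtains e U n m where "0 < e" "\<And>k. openin X (U k)" "\<And>k. U k \<noteq> {}"
    "\<And>i j. i \<noteq> j \<Longrightarrow> U i \<inter> U j = {}" "\<And>k. k \<le> n k"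
    "\<And>k x. x \<in> U k \<Longrightarrow> e \<le> sum (sqmod c x) {n k..<m k}"
proof -
  obtain d where d: "0 < d" and large: "large_tails c d (topspace X)"
    using not_uc unfolding unif_sq_cauchy_def large_tails_def by (auto simp: not_le)
  have "\<exists>n m V R'. N \<le> n \<and> openin X V \<and> V \<noteq> {} \<and> V \<subseteq> R \<and> openin X R' \<and> R' \<subseteq> R \<and>
      V \<inter> R' = {} \<and> large_tails c d R' \<and> (\<forall>x\<in>V. d / 2 \<le> sum (sqmod c x) {n..<m})"
    if "openin X R" "large_tails c d R" for R N
    using large_tails_split[OF X c summable d that] by metis
  then obtain n' m' V' R' where step: "\<And>R N. openin X R \<Longrightarrow> large_tails c d R \<Longrightarrow>
      N \<le> n' R N \<and> openin X (V' R N) \<and> V' R N \<noteq> {} \<and> V' R N \<subseteq> R \<and> openin X (R' R N) \<and>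
      R' R N \<subseteq> R \<and> V' R N \<inter> R' R N = {} \<and> large_tails c d (R' R N) \<and>
      (\<forall>x\<in>V' R N. d / 2 \<le> sum (sqmod c x) {n' R N..<m' R N})"
    by metis
  \<comment> \<open>U k is split off from the remainder Rs k, leaving Rs (Suc k) for the later sets.\<close>
  define Rs where "Rs = rec_nat (topspace X) (\<lambda>k R. R' R k)"
  have Rs_Suc: "Rs (Suc k) = R' (Rs k) k" for k by (simp add: Rs_def)
  have Rs: "openin X (Rs k) \<and> large_tails c d (Rs k)" for k
    by (induction k) (simp_all add: Rs_def large step)
  define U where "U k = V' (Rs k) k" for k
  have U: "k \<le> n' (Rs k) k \<and> openin X (U k) \<and> U k \<noteq> {} \<and> U k \<subseteq> Rs k \<and>
      Rs (Suc k) \<subseteq> Rs k \<and> U k \<inter> Rs (Suc k) = {} \<and>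
      (\<forall>x\<in>U k. d / 2 \<le> sum (sqmod c x) {n' (Rs k) k..<m' (Rs k) k})" for k
    using step[OF Rs[of k, THEN conjunct1] Rs[of k, THEN conjunct2], of k] by (simp add: U_def Rs_Suc)
  have Rs_mono: "Rs j \<subseteq> Rs k" if "k \<le> j" for j k
    using lift_Suc_antimono_le[of Rs k j] U that by blast
  have "U i \<inter> U j = {}" if "i < j" for i j
    using U[of i] U[of j] Rs_mono[of "Suc i" j] that by auto
  then have "U i \<inter> U j = {}" if "i \<noteq> j" for i j
    using that by (metis Int_commute linorder_neqE_nat)
  then show ?thesis
    using that[of "d / 2" U "\<lambda>k. n' (Rs k) k" "\<lambda>k. m' (Rs k) k"] U d by auto
qed

section \<open>Coefficients that are uniformly square summable\<close>

definition unit_vec :: "'a topology \<Rightarrow> nat \<Rightarrow> nat \<Rightarrow> 'a \<Rightarrow> complex" where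
  "unit_vec X i j x = (if j = i \<and> x \<in> topspace X then 1 else 0)"

definition trunc_vec :: "nat \<Rightarrow> (nat \<Rightarrow> 'a \<Rightarrow> complex) \<Rightarrow> nat \<Rightarrow> 'a \<Rightarrow> complex" where
  "trunc_vec n w j x = (if j < n then w j x else 0)"

definition tail_vec :: "nat \<Rightarrow> (nat \<Rightarrow> 'a \<Rightarrow> complex) \<Rightarrow> nat \<Rightarrow> 'a \<Rightarrow> complex" where
  "tail_vec n w j x = (if n \<le> j then w j x else 0)"

lemma unit_vec_l2:
  assumes "compact_space X"
  shows "unit_vec X i \<in> l2 X"
proof (rule l2_finite_support[OF assms, of _ "Suc i"])
  show "unit_vec X i j \<in> cfun X" for j
    by (cases "j = i") (simp_all add: unit_vec_def[abs_def] cfun_const cfun_zero)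
qed (simp add: unit_vec_def)

lemma trunc_vec_l2: "compact_space X \<Longrightarrow> w \<in> l2 X \<Longrightarrow> trunc_vec n w \<in> l2 X"
  unfolding trunc_vec_def[abs_def] by (rule l2_restrict)

lemma tail_vec_l2: "compact_space X \<Longrightarrow> w \<in> l2 X \<Longrightarrow> tail_vec n w \<in> l2 X"
  unfolding tail_vec_def[abs_def] by (rule l2_restrict)

lemma l2dual_trunc_vec:
  assumes X: "compact_space X" and \<tau>: "\<tau> \<in> l2dual X" and w: "w \<in> l2 X"
  shows "\<tau> (trunc_vec n w) = (\<lambda>x. \<Sum>i<n. \<tau> (unit_vec X i) x * w i x)"
proof (induction n)
  case 0
  have "trunc_vec 0 w = (\<lambda>j x. 0)" by (simp add: trunc_vec_def[abs_def])
  then show ?case using l2dual_zero_vec[OF X \<tau>] by simp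
next
  case (Suc n)
  have "trunc_vec (Suc n) w = (\<lambda>j x. trunc_vec n w j x + l2act (unit_vec X n) (w n) j x)"
    using l2_outside[OF w] by (auto simp: trunc_vec_def l2act_def unit_vec_def fun_eq_iff less_Suc_eq)
  then show ?case
    using l2dualD(3)[OF \<tau> trunc_vec_l2[OF X w] l2_act[OF X unit_vec_l2[OF X] l2D[OF w]]]
      l2dualD(4)[OF \<tau> unit_vec_l2[OF X] l2D[OF w]] Suc by simp
qed

lemma l2dual_trunc_tail:
  assumes X: "compact_space X" and \<tau>: "\<tau> \<in> l2dual X" and w: "w \<in> l2 X"
  shows "\<tau> w = (\<lambda>x. \<tau> (trunc_vec n w) x + \<tau> (tail_vec n w) x)"
proof -
  have "w = (\<lambda>j x. trunc_vec n w j x + tail_vec n w j x)"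
    by (simp add: trunc_vec_def tail_vec_def fun_eq_iff)
  then show ?thesis using l2dualD(3)[OF \<tau> trunc_vec_l2[OF X w] tail_vec_l2[OF X w]] by metis
qed

lemma sum_sqmod_tail_vec: "sum (sqmod (tail_vec n w) x) {..<N} = sum (sqmod w x) {n..<N}"
proof -
  have "sum (sqmod (tail_vec n w) x) {..<N} = sum (sqmod (tail_vec n w) x) {n..<N}"
    by (rule sum.mono_neutral_right) (auto simp: sqmod_def tail_vec_def)
  also have "\<dots> = sum (sqmod w x) {n..<N}"
    by (rule sum.cong) (auto simp: sqmod_def tail_vec_def)
  finally show ?thesis .
qed

lemma l2norm_tail_vec_le:
  assumes X: "compact_space X" and w: "w \<in> l2 X" and \<eta>: "0 \<le> \<eta>"
    and small: "\<And>x N. x \<in> topspace X \<Longrightarrow> sum (sqmod w x) {n..<N} \<le> \<eta>"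
  shows "l2norm X (tail_vec n w) \<le> sqrt \<eta>"
  by (rule l2norm_le[OF X tail_vec_l2[OF X w] \<eta>]) (simp add: sum_sqmod_tail_vec small)

lemma l2dual_expansion:
  assumes X: "compact_space X" and \<tau>: "\<tau> \<in> l2dual X" and w: "w \<in> l2 X" and x: "x \<in> topspace X"
  shows "(\<lambda>N. \<Sum>i<N. \<tau> (unit_vec X i) x * w i x) \<longlonglongrightarrow> \<tau> w x"
proof (rule LIMSEQ_I)
  fix r :: real assume "r > 0"
  obtain D where D: "0 \<le> D" "\<And>a. a \<in> l2 X \<Longrightarrow> cnorm X (\<tau> a) \<le> D * l2norm X a"
    using l2dual_bound[OF X \<tau>] by blast
  define \<eta> where "\<eta> = (r / (D + 1))\<^sup>2"
  have \<eta>: "0 < \<eta>" unfolding \<eta>_def using \<open>r > 0\<close> D by simp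
  have D\<eta>: "D * sqrt \<eta> < r"
    using \<open>r > 0\<close> D(1) by (simp add: \<eta>_def divide_less_eq algebra_simps)
  obtain N0 where N0: "\<forall>n\<ge>N0. \<forall>m. \<forall>x\<in>topspace X. sum (sqmod w x) {n..<m} \<le> \<eta>"
    using l2_imp_unif_sq_cauchy[OF X w] \<eta> unfolding unif_sq_cauchy_def by blast
  have "norm ((\<Sum>i<N. \<tau> (unit_vec X i) x * w i x) - \<tau> w x) < r" if "N0 \<le> N" for N
  proof -
    have "norm ((\<Sum>i<N. \<tau> (unit_vec X i) x * w i x) - \<tau> w x) = cmod (\<tau> (tail_vec N w) x)"
      using l2dual_trunc_tail[OF X \<tau> w, of N] l2dual_trunc_vec[OF X \<tau> w, of N]
      by (simp add: fun_eq_iff)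
    also have "\<dots> \<le> cnorm X (\<tau> (tail_vec N w))"
      by (rule cnorm_upper[OF X cfun_continuous_map[OF l2dualD(2)[OF \<tau> tail_vec_l2[OF X w]]] x])
    also have "\<dots> \<le> D * l2norm X (tail_vec N w)" by (rule D(2)[OF tail_vec_l2[OF X w]])
    also have "\<dots> \<le> D * sqrt \<eta>"
      using l2norm_tail_vec_le[OF X w less_imp_le[OF \<eta>], of N] N0 that D(1)
      by (intro mult_left_mono) auto
    finally show ?thesis using D\<eta> by simp
  qed
  then show "\<exists>N0. \<forall>N\<ge>N0. norm ((\<Sum>i<N. \<tau> (unit_vec X i) x * w i x) - \<tau> w x) < r" by blast
qed

lemma l2dual_unit_sq_bounded:
  assumes X: "compact_space X" and \<tau>: "\<tau> \<in> l2dual X"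
  obtains D where "\<And>x n. x \<in> topspace X \<Longrightarrow> sum (sqmod (\<lambda>i. \<tau> (unit_vec X i)) x) {..<n} \<le> D"
proof -
  define b where "b = (\<lambda>i. \<tau> (unit_vec X i))"
  have b: "b i \<in> cfun X" for i unfolding b_def by (rule l2dualD(2)[OF \<tau> unit_vec_l2[OF X]])
  obtain D where D: "0 \<le> D" "\<And>a. a \<in> l2 X \<Longrightarrow> cnorm X (\<tau> a) \<le> D * l2norm X a"
    using l2dual_bound[OF X \<tau>] by blast
  have "sum (sqmod b x) {..<n} \<le> D\<^sup>2" if x: "x \<in> topspace X" for x n
  proof -
    define w where "w = (\<lambda>j x. if j < n then cnj (b j x) else 0)"
    have "w j \<in> cfun X" for j
      by (cases "j < n") (simp_all add: w_def cfun_cnj b cfun_zero)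
    then have w: "w \<in> l2 X" by (rule l2_finite_support[OF X, of _ n]) (simp add: w_def)
    define S where "S x = sum (sqmod b x) {..<n}" for x
    have "\<tau> w = (\<lambda>x. \<Sum>i<n. b i x * cnj (b i x))"
      using l2dual_trunc_vec[OF X \<tau> w, of n]
      by (simp add: b_def w_def trunc_vec_def[abs_def] cong: if_cong)
    then have \<tau>w: "\<tau> w = (\<lambda>x. complex_of_real (S x))"
      by (simp only: sum_mult_cnj_self) (simp add: S_def sqmod_def)
    define M where "M = cnorm X (\<lambda>x. complex_of_real (S x))"
    have S_cont: "continuous_map X euclidean (\<lambda>x. complex_of_real (S x))"
      using cfun_continuous_map[OF l2dualD(2)[OF \<tau> w]] \<tau>w by simp
    have S_le: "S y \<le> M" if "y \<in> topspace X" for y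
      unfolding M_def by (rule le_cnorm_of_real[OF X S_cont that]) (simp add: S_def sum_nonneg sqmod_nonneg)
    have M: "0 \<le> M" unfolding M_def by (rule cnorm_nonneg[OF X S_cont])
    have "l2norm X w \<le> sqrt M"
    proof (rule l2norm_le[OF X w M])
      fix y N assume y: "y \<in> topspace X"
      have "sum (sqmod w y) {..<N} = sum (sqmod w y) ({..<N} \<inter> {..<n})"
        by (rule sum.mono_neutral_right) (auto simp: sqmod_def w_def)
      also have "\<dots> = sum (sqmod b y) ({..<N} \<inter> {..<n})"
        by (rule sum.cong) (auto simp: sqmod_def w_def)
      also have "\<dots> \<le> S y" unfolding S_def by (rule sum_mono2) (auto simp: sqmod_nonneg)
      finally show "sum (sqmod w y) {..<N} \<le> M" using S_le[OF y] by simp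
    qed
    then have "M \<le> D * sqrt M"
      using D(2)[OF w] D(1) unfolding \<tau>w M_def[symmetric] by (meson mult_left_mono order_trans)
    then have "M \<le> D\<^sup>2" using le_square_if_le_mult_sqrt M D(1) by blast
    then show ?thesis using S_le[OF x] unfolding S_def by linarith
  qed
  then show ?thesis using that unfolding b_def by blast
qed

lemma Baire_closed_cover_open:
  fixes E :: "nat \<Rightarrow> 'a set"
  assumes X: "compact_space X" "Hausdorff_space X" and W: "openin X W" "W \<noteq> {}"
    and closed: "\<And>n. closedin X (E n)" and cover: "W \<subseteq> (\<Union>n. E n)"
  obtains n V where "openin X V" "V \<noteq> {}" "V \<subseteq> W \<inter> E n"
proof -
  have WT: "W \<subseteq> topspace X" using W(1) openin_subset by blast
  define S where "S = subtopology X W"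
  have topS: "topspace S = W" unfolding S_def using WT by auto
  have lcS: "locally_compact_space S" unfolding S_def
    by (rule locally_compact_space_open_subset[OF _ compact_imp_locally_compact_space[OF X(1)] W(1)])
       (use X(2) in simp)
  have rgS: "regular_space S" unfolding S_def
    by (rule regular_space_subtopology[OF locally_compact_Hausdorff_imp_regular_space
        [OF compact_imp_locally_compact_space[OF X(1)] X(2)]])
  have "\<exists>n. S interior_of (E n \<inter> W) \<noteq> {}"
  proof (rule ccontr)
    assume "\<not> ?thesis"
    then have empty: "\<And>n. S interior_of (E n \<inter> W) = {}" by auto
    have "S interior_of \<Union>(range (\<lambda>n. E n \<inter> W)) = {}"
    proof (rule Baire_category_alt)
      show "completely_metrizable_space S \<or> locally_compact_space S \<and> regular_space S"
        using lcS rgS by simp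
      show "countable (range (\<lambda>n. E n \<inter> W))" by simp
      fix T assume "T \<in> range (\<lambda>n. E n \<inter> W)"
      then obtain n where T: "T = E n \<inter> W" by auto
      show "closedin S T \<and> S interior_of T = {}"
        unfolding T S_def using closed[of n] empty[of n] by (auto simp: closedin_subtopology S_def)
    qed
    moreover have "\<Union>(range (\<lambda>n. E n \<inter> W)) = W" using cover by blast
    ultimately have "S interior_of W = {}" by simp
    then show False using topS W(2) by (metis interior_of_topspace)
  qed
  then obtain n where n: "S interior_of (E n \<inter> W) \<noteq> {}" by blast
  show ?thesis
  proof (rule that[of "S interior_of (E n \<inter> W)" n])
    show "openin X (S interior_of (E n \<inter> W))"
      by (rule openin_trans_full[OF _ W(1)]) (simp add: S_def)
    show "S interior_of (E n \<inter> W) \<subseteq> W \<inter> E n" using interior_of_subset[of S "E n \<inter> W"] by blast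
  qed (rule n)
qed

lemma sum_sqmod_tails_small_on_open:
  assumes X: "compact_space X" "Hausdorff_space X" and b: "\<And>i. b i \<in> cfun X"
    and summable: "\<And>z. z \<in> topspace X \<Longrightarrow> summable (sqmod b z)" and \<eta>: "0 < \<eta>"
    and W: "openin X W" "W \<noteq> {}"
  obtains V n where "openin X V" "V \<noteq> {}" "V \<subseteq> W" "\<And>z N. z \<in> V \<Longrightarrow> sum (sqmod b z) {n..<N} \<le> \<eta>"
proof -
  define E where "E n = {z \<in> topspace X. \<forall>N. sum (sqmod b z) {n..<N} \<le> \<eta>}" for n
  have closed: "closedin X (E n)" for n
  proof -
    have "E n = (\<Inter>N. {z \<in> topspace X. sum (sqmod b z) {n..<N} \<in> {..\<eta>}})"
      unfolding E_def by auto
    moreover have "closedin X {z \<in> topspace X. sum (sqmod b z) {n..<N} \<in> {..\<eta>}}" for N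
      by (rule closedin_continuous_map_preimage[OF continuous_map_sum_sqmod[OF b]]) simp
    ultimately show ?thesis by (auto intro: closedin_Inter)
  qed
  have "\<exists>n. z \<in> E n" if z: "z \<in> W" for z
  proof -
    have zT: "z \<in> topspace X" using z W(1) openin_subset by blast
    obtain n where n: "\<forall>m\<ge>n. \<forall>N. norm (sum (sqmod b z) {m..<N}) < \<eta>"
      using summable[OF zT] \<eta> unfolding summable_Cauchy by blast
    have "sum (sqmod b z) {n..<N} \<le> \<eta>" for N
      using n[rule_format, of n N] by (simp add: abs_less_iff)
    then show ?thesis using zT unfolding E_def by blast
  qed
  then have "W \<subseteq> (\<Union>n. E n)" by blast
  then obtain n V where V: "openin X V" "V \<noteq> {}" "V \<subseteq> W \<inter> E n"
    by (rule Baire_closed_cover_open[OF X W closed])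
  show ?thesis
  proof (rule that[of V n])
    show "sum (sqmod b z) {n..<N} \<le> \<eta>" if "z \<in> V" for z N
      using V(3) that unfolding E_def by blast
  qed (use V in auto)
qed

lemma sum_mult_tail_vec:
  "(\<Sum>i<N. f i * tail_vec n w i x) = (\<Sum>i\<in>{n..<N}. f i * w i x)"
proof -
  have "(\<Sum>i<N. f i * tail_vec n w i x) = (\<Sum>i\<in>{n..<N}. f i * tail_vec n w i x)"
    by (rule sum.mono_neutral_right) (auto simp: tail_vec_def)
  also have "\<dots> = (\<Sum>i\<in>{n..<N}. f i * w i x)"
    by (rule sum.cong) (auto simp: tail_vec_def)
  finally show ?thesis .
qed

lemma l2dual_tail_vec_bound:
  assumes X: "compact_space X" and \<tau>: "\<tau> \<in> l2dual X" and w: "w \<in> l2 X" and z: "z \<in> topspace X"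
    and small: "\<And>N. sum (sqmod (\<lambda>i. \<tau> (unit_vec X i)) z) {n..<N} \<le> \<eta>"
  shows "cmod (\<tau> (tail_vec n w) z) \<le> sqrt \<eta> * l2norm X w"
proof -
  define b where "b = (\<lambda>i. \<tau> (unit_vec X i))"
  have "cmod (\<Sum>i<N. b i z * tail_vec n w i z) \<le> sqrt \<eta> * l2norm X w" for N
  proof -
    have "cmod (\<Sum>i<N. b i z * tail_vec n w i z) = cmod (\<Sum>i\<in>{n..<N}. b i z * w i z)"
      by (simp only: sum_mult_tail_vec)
    also have "\<dots> \<le> sqrt (\<Sum>i\<in>{n..<N}. (cmod (b i z))\<^sup>2) * sqrt (\<Sum>i\<in>{n..<N}. (cmod (w i z))\<^sup>2)"
      by (rule cauchy_schwarz_complex)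
    also have "\<dots> \<le> sqrt \<eta> * l2norm X w"
      using small[of N] small[of n] sqrt_sum_sqmod_le_l2norm[OF X w z, of n N]
      by (intro mult_mono) (auto simp: b_def sqmod_def intro: sum_nonneg)
    finally show ?thesis .
  qed
  moreover have "(\<lambda>N. \<Sum>i<N. b i z * tail_vec n w i z) \<longlonglongrightarrow> \<tau> (tail_vec n w) z"
    unfolding b_def by (rule l2dual_expansion[OF X \<tau> tail_vec_l2[OF X w] z])
  ultimately show ?thesis by (intro LIMSEQ_le_const2[OF tendsto_norm]) auto
qed

definition tail_functional :: "'a topology \<Rightarrow> nat \<Rightarrow> ((nat \<Rightarrow> 'a \<Rightarrow> complex) \<Rightarrow> 'a \<Rightarrow> complex)
    \<Rightarrow> (nat \<Rightarrow> 'a \<Rightarrow> complex) \<Rightarrow> 'a \<Rightarrow> complex" where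
  "tail_functional X n \<tau> w x = \<tau> w x + dual_comb X {..<n} (\<lambda>i x. - \<tau> (unit_vec X i) x) w x"

lemma tail_functional_in_l2dual:
  assumes X: "compact_space X" and \<tau>: "\<tau> \<in> l2dual X"
  shows "tail_functional X n \<tau> \<in> l2dual X"
  unfolding tail_functional_def[abs_def]
  by (intro l2dual_add[OF X \<tau>] dual_comb_in_l2dual[OF X] finite_lessThan
      cfun_minus l2dualD(2)[OF \<tau> unit_vec_l2[OF X]])

lemma tail_functional_eq:
  assumes X: "compact_space X" and \<tau>: "\<tau> \<in> l2dual X" and w: "w \<in> l2 X"
  shows "tail_functional X n \<tau> w = \<tau> (tail_vec n w)"
  using l2dual_trunc_tail[OF X \<tau> w, of n] l2dual_trunc_vec[OF X \<tau> w, of n] w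
  by (simp add: tail_functional_def dual_comb_def sum_negf fun_eq_iff)

definition discrepancy :: "(((nat \<Rightarrow> 'a \<Rightarrow> complex) \<Rightarrow> 'a \<Rightarrow> complex) \<Rightarrow> 'a \<Rightarrow> complex)
    \<Rightarrow> (nat \<Rightarrow> 'a \<Rightarrow> complex) \<Rightarrow> ((nat \<Rightarrow> 'a \<Rightarrow> complex) \<Rightarrow> 'a \<Rightarrow> complex) \<Rightarrow> 'a \<Rightarrow> complex" where
  "discrepancy F a \<tau> x = F \<tau> x - cnj (\<tau> a x)"

lemma discrepancy_dact:
  assumes "F \<in> l2bidual X" "\<tau> \<in> l2dual X" "f \<in> cfun X"
  shows "discrepancy F a (dact \<tau> f) x = discrepancy F a \<tau> x * f x"
  unfolding discrepancy_def bidual_dact[OF assms] by (simp add: dact_def algebra_simps)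

text \<open>F and the conjugated coefficient vector a agree on finite combinations of coordinate
  functionals, so the discrepancy does not see the first n coordinates of \<tau>.\<close>

lemma discrepancy_tail_functional:
  assumes X: "compact_space X" and F: "F \<in> l2bidual X" and \<tau>: "\<tau> \<in> l2dual X"
    and a: "a = (\<lambda>i x. cnj (F (coord X i) x))" "a \<in> l2 X"
  shows "discrepancy F a (tail_functional X n \<tau>) x = discrepancy F a \<tau> x"
proof -
  define \<kappa> where "\<kappa> = dual_comb X {..<n} (\<lambda>i x. - \<tau> (unit_vec X i) x)"
  have b: "(\<lambda>x. - \<tau> (unit_vec X i) x) \<in> cfun X" for i
    by (rule cfun_minus[OF l2dualD(2)[OF \<tau> unit_vec_l2[OF X]]])
  have \<kappa>: "\<kappa> \<in> l2dual X" unfolding \<kappa>_def by (rule dual_comb_in_l2dual[OF X]) (simp_all add: b)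
  have "F \<kappa> x = cnj (\<kappa> a x)"
    using bidual_dual_comb[OF X _ b F, of "{..<n}"] a by (simp add: \<kappa>_def dual_comb_def mult.commute)
  moreover have "tail_functional X n \<tau> = (\<lambda>w x. \<tau> w x + \<kappa> w x)"
    by (simp add: tail_functional_def[abs_def] \<kappa>_def)
  ultimately show ?thesis using bidual_add[OF F \<tau> \<kappa>] by (simp add: discrepancy_def)
qed

lemma bidual_local_estimate:
  assumes X: "compact_space X" "Hausdorff_space X" and F: "F \<in> l2bidual X"
    and C: "0 \<le> C" "\<And>\<sigma>. \<sigma> \<in> l2dual X \<Longrightarrow> cnorm X (F \<sigma>) \<le> C * dnorm X \<sigma>"
    and a: "a = (\<lambda>i x. cnj (F (coord X i) x))" "a \<in> l2 X" and \<tau>: "\<tau> \<in> l2dual X"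
    and V: "openin X V" "y \<in> V" and \<eta>: "0 \<le> \<eta>"
    and small: "\<And>z N. z \<in> V \<Longrightarrow> sum (sqmod (\<lambda>i. \<tau> (unit_vec X i)) z) {n..<N} \<le> \<eta>"
  shows "cmod (discrepancy F a \<tau> y) \<le> sqrt \<eta> * (C + l2norm X a)"
proof -
  have VT: "V \<subseteq> topspace X" using V(1) openin_subset by blast
  obtain f where f: "f \<in> cfun X" "f y = 1" "\<And>z. z \<notin> V \<Longrightarrow> f z = 0" "\<And>z. cmod (f z) \<le> 1"
    using urysohn_cfun[OF X V] by metis
  define \<rho> where "\<rho> = dact (tail_functional X n \<tau>) f"
  have tail: "tail_functional X n \<tau> \<in> l2dual X" by (rule tail_functional_in_l2dual[OF X(1) \<tau>])
  have \<rho>: "\<rho> \<in> l2dual X" unfolding \<rho>_def by (rule l2dual_dact[OF X(1) tail f(1)])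
  have \<rho>_le: "cmod (\<rho> w z) \<le> sqrt \<eta> * l2norm X w" if w: "w \<in> l2 X" for w z
  proof (cases "z \<in> V")
    case True
    have "cmod (\<rho> w z) = cmod (f z) * cmod (\<tau> (tail_vec n w) z)"
      by (simp add: \<rho>_def dact_def tail_functional_eq[OF X(1) \<tau> w] norm_mult)
    also have "\<dots> \<le> 1 * (sqrt \<eta> * l2norm X w)"
      using f(4)[of z] l2dual_tail_vec_bound[OF X(1) \<tau> w, of z n \<eta>] True VT small
      by (intro mult_mono) auto
    finally show ?thesis by simp
  qed (use f(3) \<eta> l2norm_nonneg[OF X(1) w] in \<open>simp add: \<rho>_def dact_def\<close>)
  have cnorm_\<rho>: "cnorm X (\<rho> w) \<le> sqrt \<eta> * l2norm X w" if "w \<in> l2 X" for w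
    using \<rho>_le[OF that] \<eta> l2norm_nonneg[OF X(1) that] by (intro cnorm_least) auto
  have "discrepancy F a \<tau> y = discrepancy F a \<rho> y"
    using discrepancy_dact[OF F tail f(1)] discrepancy_tail_functional[OF X(1) F \<tau> a] f(2)
    by (simp add: \<rho>_def)
  then have "cmod (discrepancy F a \<tau> y) \<le> cmod (F \<rho> y) + cmod (\<rho> a y)"
    by (metis complex_mod_cnj discrepancy_def norm_triangle_ineq4)
  also have "\<dots> \<le> cnorm X (F \<rho>) + cnorm X (\<rho> a)"
    using cnorm_upper[OF X(1) cfun_continuous_map[OF bidual_cfun[OF F \<rho>]]]
      cnorm_upper[OF X(1) cfun_continuous_map[OF l2dualD(2)[OF \<rho> a(2)]]] V VT
    by (intro add_mono) auto
  also have "\<dots> \<le> C * sqrt \<eta> + sqrt \<eta> * l2norm X a"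
    using C(2)[OF \<rho>] dnorm_le[of "sqrt \<eta>" X \<rho>] cnorm_\<rho> \<eta> C(1) a(2)
    by (intro add_mono) (auto intro: order_trans mult_left_mono)
  finally show ?thesis by (simp add: algebra_simps)
qed

lemma discrepancy_small:
  assumes X: "compact_space X" "Hausdorff_space X" and F: "F \<in> l2bidual X"
    and a: "a = (\<lambda>i x. cnj (F (coord X i) x))" "a \<in> l2 X" and \<tau>: "\<tau> \<in> l2dual X"
    and x: "x \<in> topspace X" and \<epsilon>: "0 < \<epsilon>"
  shows "cmod (discrepancy F a \<tau> x) < \<epsilon>"
proof -
  obtain C where C: "0 \<le> C" "\<And>\<sigma>. \<sigma> \<in> l2dual X \<Longrightarrow> cnorm X (F \<sigma>) \<le> C * dnorm X \<sigma>"
    using bidual_bound[OF X(1) F] by blast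
  define A where "A = C + l2norm X a"
  have A: "0 \<le> A" unfolding A_def using C(1) l2norm_nonneg[OF X(1) a(2)] by simp
  define G where "G = discrepancy F a \<tau>"
  have G: "continuous_map X euclidean G"
    unfolding G_def discrepancy_def[abs_def]
    by (intro continuous_map_diff continuous_map_cnj cfun_continuous_map bidual_cfun[OF F \<tau>]
        l2dualD(2)[OF \<tau> a(2)])
  obtain D where D: "\<And>z n. z \<in> topspace X \<Longrightarrow> sum (sqmod (\<lambda>i. \<tau> (unit_vec X i)) z) {..<n} \<le> D"
    using l2dual_unit_sq_bounded[OF X(1) \<tau>] by blast
  have summable: "summable (sqmod (\<lambda>i. \<tau> (unit_vec X i)) z)" if "z \<in> topspace X" for z
    by (rule summable_sqmod_if_bounded[OF D[OF that]])
  define W where "W = {z \<in> topspace X. G z \<in> ball (G x) (\<epsilon> / 2)}"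
  have W: "openin X W" "W \<noteq> {}"
    using x \<epsilon> openin_continuous_map_preimage[OF G, of "ball (G x) (\<epsilon> / 2)"] by (auto simp: W_def)
  define \<eta> where "\<eta> = (\<epsilon> / (2 * (A + 1)))\<^sup>2"
  have \<eta>: "0 < \<eta>" unfolding \<eta>_def using \<epsilon> A by simp
  have "sqrt \<eta> = \<epsilon> / (2 * (A + 1))" unfolding \<eta>_def using \<epsilon> A by simp
  then have "sqrt \<eta> * A = \<epsilon> / 2 * (A / (A + 1))" by simp
  also have "\<dots> < \<epsilon> / 2 * 1" using \<epsilon> A by (intro mult_strict_left_mono) auto
  finally have \<eta>A: "sqrt \<eta> * A < \<epsilon> / 2" by simp
  \<comment> \<open>Baire yields a point y near x around which the coefficients of \<tau> have small tails.\<close>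
  obtain V n where V: "openin X V" "V \<noteq> {}" "V \<subseteq> W"
    "\<And>z N. z \<in> V \<Longrightarrow> sum (sqmod (\<lambda>i. \<tau> (unit_vec X i)) z) {n..<N} \<le> \<eta>"
    using sum_sqmod_tails_small_on_open[OF X _ summable \<eta> W] l2dualD(2)[OF \<tau> unit_vec_l2[OF X(1)]]
    by metis
  then obtain y where y: "y \<in> V" by blast
  have "cmod (G y) \<le> sqrt \<eta> * A"
    unfolding G_def A_def by (rule bidual_local_estimate[OF X F C a \<tau> V(1) y less_imp_le[OF \<eta>] V(4)])
  moreover have "dist (G x) (G y) < \<epsilon> / 2" using y V(3) unfolding W_def by auto
  ultimately show ?thesis using \<eta>A norm_triangle_ineq2[of "G x" "G y"] by (simp add: G_def dist_norm)
qed

lemma bidual_represented_if_unif_sq_cauchy: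
  assumes X: "compact_space X" "Hausdorff_space X" and F: "F \<in> l2bidual X"
    and uc: "unif_sq_cauchy X (\<lambda>i. F (coord X i))"
  shows "\<exists>a\<in>l2 X. \<forall>\<tau>\<in>l2dual X. F \<tau> = (\<lambda>x. cnj (\<tau> a x))"
proof
  define a where "a = (\<lambda>i x. cnj (F (coord X i) x))"
  have "sqmod a = sqmod (\<lambda>i. F (coord X i))" by (simp add: sqmod_def a_def fun_eq_iff)
  then show a: "a \<in> l2 X"
    using uc bidual_cfun[OF F coord_in_l2dual[OF X(1)]]
    by (simp add: l2_iff_unif_sq_cauchy[OF X(1)] unif_sq_cauchy_def a_def cfun_cnj)
  show "\<forall>\<tau>\<in>l2dual X. F \<tau> = (\<lambda>x. cnj (\<tau> a x))"
  proof
    fix \<tau> assume \<tau>: "\<tau> \<in> l2dual X"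
    have "discrepancy F a \<tau> x = 0" for x
    proof (cases "x \<in> topspace X")
      case True
      then have "cmod (discrepancy F a \<tau> x) \<le> 0 + \<epsilon>" if "0 < \<epsilon>" for \<epsilon>
        using discrepancy_small[OF X F a_def a \<tau> True that] by simp
      then show ?thesis using field_le_epsilon[of "cmod (discrepancy F a \<tau> x)" 0] by simp
    next
      case False
      then show ?thesis
        using cfun_outside[OF bidual_cfun[OF F \<tau>]] cfun_outside[OF l2dualD(2)[OF \<tau> a]]
        by (simp add: discrepancy_def)
    qed
    then show "F \<tau> = (\<lambda>x. cnj (\<tau> a x))" by (simp add: discrepancy_def fun_eq_iff)
  qed
qed

theorem lemma5p3:
  fixes X :: "'a topology"
  assumes "compact_space X" and "Hausdorff_space X"
    and "\<not> Cstar_reflexive_C X"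
  shows "\<exists>U :: nat \<Rightarrow> 'a set. (\<forall>k. openin X (U k) \<and> U k \<noteq> {}) \<and>
           (\<forall>i j. i \<noteq> j \<longrightarrow> U i \<inter> U j = {}) \<and> prod_canon_incl X U"
proof -
  obtain F where F: "F \<in> l2bidual X"
    and not_repr: "\<not> (\<exists>a\<in>l2 X. \<forall>\<tau>\<in>l2dual X. F \<tau> = (\<lambda>x. cnj (\<tau> a x)))"
    using assms(3) unfolding Cstar_reflexive_C_def by blast
  define c where "c = (\<lambda>i. F (coord X i))"
  have c: "c i \<in> cfun X" for i unfolding c_def by (rule bidual_cfun[OF F coord_in_l2dual[OF assms(1)]])
  obtain K where K: "0 \<le> K" "\<And>x n. x \<in> topspace X \<Longrightarrow> sum (sqmod c x) {..<n} \<le> K"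
    using bidual_coord_sq_bounded[OF assms(1) F] unfolding c_def by blast
  have summable: "summable (sqmod c x)" if "x \<in> topspace X" for x
    by (rule summable_sqmod_if_bounded[OF K(2)[OF that]])
  have "\<not> unif_sq_cauchy X c"
    using bidual_represented_if_unif_sq_cauchy[OF assms(1,2) F] not_repr unfolding c_def by blast
  then obtain e U n m where "0 < e" "\<And>k. openin X (U k)" "\<And>k. U k \<noteq> {}"
    "\<And>i j. i \<noteq> j \<Longrightarrow> U i \<inter> U j = {}" "\<And>k. k \<le> n k"
    "\<And>k x. x \<in> U k \<Longrightarrow> e \<le> sum (sqmod c x) {n k..<m k}"
    using disjoint_blocks[OF assms(1,2) c summable] by metis
  moreover have "prod_canon_incl X U"
    using prod_canon_incl_from_blocks[OF assms(1,2) F K[unfolded c_def]] calculation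
    unfolding c_def by blast
  ultimately show ?thesis by blast
qed

end
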